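(* Let $\ell\ge1$, $2n=\ell(\ell+1)$, $c>0$ and $k\ge1$ with $2k\le\ell+1$. Let $B_1,\dots,B_{\ell+1}$ and $C_1,\dots,C_{\ell+1}$ be two partitions of $[2n]$ into sets of size $\ell$, and let $O\in O(2n)$ satisfy: $O_{v,j}=0$ unless $v\in B_i$ and $j\in C_i$ for some $i$, and $|O_{v,j}|\ge c\,\ell^{-1/2}$ whenever $v\in B_i$, $j\in C_i$. Let $\mathcal M$ be a perfect matching of $[2n]$ in which every edge joins two different sets $B_i\neq B_{i'}$ and which is sparsely arranged: for every $i\neq i'$ some edge of $\mathcal M$ has one endpoint in $B_i$ and the other in $B_{i'}$. Then for every $S\in\mathcal S_{2k}$ whose $2k$ elements lie in $2k$ pairwise distinct sets $C_i$, there exist $k$ distinct edges $M_1,\dots,M_k\in\mathcal M$ such that, with $R=M_1\cup\dots\cup M_k$, the submatrix $O_{R,S}$ is monomial and $|\det(O_{R,S})|\ge c^{2k}\ell^{-k}$. Consequently, if $\pi\in S_{2n}$ maps every edge of $\mathcal M$ onto an element of $\mathcal D_2$ and $P_\pi$ is the permutation matrix with $(P_\pi O)_{\pi(v),j}=O_{v,j}$, then $\pi(R)\in\mathcal D_{2k}$ and $\mathsf G^{P_\pi O}$ jointly measures $\mathsf M_S^\eta$ with $\eta=|\det((P_\pi O)_{\pi(R),S})|\ge c^{2k}\ell^{-k}=\Omega(n^{-k/2})$.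
   Context: $\mathcal S_{m}=\{S\subseteq[2n]:|S|=m\}$; $O_{R,S}$ is the submatrix of $O$ with rows $R$ and columns $S$; a square matrix is monomial if each row and column has exactly one nonzero entry. $\mathcal D_2=\{\{2j-1,2j\}:j\in[n]\}$, $\mathcal D_{2k}$ = unions of $k$ distinct elements of $\mathcal D_2$. With Majorana operators $\gamma_j$ on $(\mathbb C^2)^{\otimes n}$ and $\gamma_S=i^{\binom m2}\gamma_{j_1}\cdots\gamma_{j_m}$, $x_S=(-1)^{|X||S|-|S\cap X|}$: $\mathsf G^O(\mathbf q,X)=(2^{2n})^{n-1}\prod_{R\in\mathcal D_2}2^{-2n-1}\big(I+q_R\sum_{S\in\mathcal S_2}x_S\det(O_{R,S})\gamma_S\big)$, $\mathbf q\in\{\pm1\}^n$, $X\subseteq[2n]$; $\mathsf M^\eta_S(e)=\frac12(I+e\eta\gamma_S)$; "jointly measures" means $\mathsf M^\eta_S$ is obtained from $\mathsf G^O$ by a classical stochastic post-processing of outcomes. *)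

theory Defs
  imports Complex_Main "Jordan_Normal_Form.Determinant" "HOL-Combinatorics.Permutations"
begin

definition idx2 :: "nat \<Rightarrow> nat set" where
  "idx2 n = {1..2*n}"

definition subsets_card :: "nat \<Rightarrow> nat \<Rightarrow> nat set set" where
  "subsets_card n m = {S. S \<subseteq> idx2 n \<and> card S = m}"

definition D2 :: "nat \<Rightarrow> nat set set" where
  "D2 n = {{2*j - 1, 2*j} | j. j \<in> {1..n}}"

definition D2k :: "nat \<Rightarrow> nat \<Rightarrow> nat set set" where
  "D2k n k = {\<Union>F | F. F \<subseteq> D2 n \<and> card F = k}"

(* real 2n x 2n matrices are functions on indices [2n] x [2n] *)
definition orthogonal_2n :: "nat \<Rightarrow> (nat \<Rightarrow> nat \<Rightarrow> real) \<Rightarrow> bool" where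
  "orthogonal_2n n Om \<longleftrightarrow>
     (\<forall>j\<in>idx2 n. \<forall>j'\<in>idx2 n. (\<Sum>v\<in>idx2 n. Om v j * Om v j') = (if j = j' then 1 else 0)) \<and>
     (\<forall>v\<in>idx2 n. \<forall>v'\<in>idx2 n. (\<Sum>j\<in>idx2 n. Om v j * Om v' j) = (if v = v' then 1 else 0))"

definition submat_RS :: "(nat \<Rightarrow> nat \<Rightarrow> real) \<Rightarrow> nat set \<Rightarrow> nat set \<Rightarrow> real mat" where
  "submat_RS Om R S = mat (card R) (card S)
     (\<lambda>(a, b). Om (sorted_list_of_set R ! a) (sorted_list_of_set S ! b))"

definition monomial_sub :: "(nat \<Rightarrow> nat \<Rightarrow> real) \<Rightarrow> nat set \<Rightarrow> nat set \<Rightarrow> bool" where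
  "monomial_sub Om R S \<longleftrightarrow> card R = card S \<and>
     (\<forall>r\<in>R. \<exists>!s. s \<in> S \<and> Om r s \<noteq> 0) \<and> (\<forall>s\<in>S. \<exists>!r. r \<in> R \<and> Om r s \<noteq> 0)"

definition partition_l :: "nat \<Rightarrow> nat \<Rightarrow> (nat \<Rightarrow> nat set) \<Rightarrow> bool" where
  "partition_l n l B \<longleftrightarrow>
     (\<forall>i\<in>{1..l+1}. B i \<subseteq> idx2 n \<and> card (B i) = l) \<and>
     (\<forall>i\<in>{1..l+1}. \<forall>i'\<in>{1..l+1}. i \<noteq> i' \<longrightarrow> B i \<inter> B i' = {}) \<and>
     (\<Union>i\<in>{1..l+1}. B i) = idx2 n"

definition perfect_matching :: "nat \<Rightarrow> nat set set \<Rightarrow> bool" where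
  "perfect_matching n M \<longleftrightarrow>
     (\<forall>e\<in>M. e \<subseteq> idx2 n \<and> card e = 2) \<and> (\<forall>v\<in>idx2 n. \<exists>!e. e \<in> M \<and> v \<in> e)"

definition perm_rows :: "(nat \<Rightarrow> nat) \<Rightarrow> (nat \<Rightarrow> nat \<Rightarrow> real) \<Rightarrow> nat \<Rightarrow> nat \<Rightarrow> real" where
  "perm_rows \<pi> Om = (\<lambda>w j. Om (inv_into UNIV \<pi> w) j)"

(* Majorana operators on (C^2)^{\<otimes> n} via Jordan-Wigner:
   gamma_{2j-1} = Z..Z X_j, gamma_{2j} = Z..Z Y_j (qubit j <-> bit j-1 of the basis index) *)
definition maj :: "nat \<Rightarrow> nat \<Rightarrow> complex mat" where
  "maj n m = mat (2^n) (2^n) (\<lambda>(a, b).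
     (let q = (m - 1) div 2;
          par = (-1::complex) ^ card {l. l < q \<and> bit b l}
      in if a = flip_bit q b
         then (if odd m then par else \<i> * (if bit b q then -1 else 1) * par)
         else 0))"

definition gammaS :: "nat \<Rightarrow> nat set \<Rightarrow> complex mat" where
  "gammaS n S = (\<i> ^ (card S choose 2)) \<cdot>\<^sub>m
     foldr (*) (map (maj n) (sorted_list_of_set S)) (1\<^sub>m (2^n))"

definition xS :: "nat set \<Rightarrow> nat set \<Rightarrow> real" where
  "xS X S = (-1) ^ (card X * card S - card (S \<inter> X))"

definition G_factor :: "nat \<Rightarrow> (nat \<Rightarrow> nat \<Rightarrow> real) \<Rightarrow> (nat \<Rightarrow> int) \<Rightarrow> nat set \<Rightarrow> nat \<Rightarrow> complex mat" where
  "G_factor n Om q X j = complex_of_real (1 / 2 ^ (2*n + 1)) \<cdot>\<^sub>m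
     (1\<^sub>m (2^n) + of_int (q j) \<cdot>\<^sub>m
        mat (2^n) (2^n) (\<lambda>(a, b). \<Sum>S\<in>subsets_card n 2.
           complex_of_real (xS X S * det (submat_RS Om {2*j - 1, 2*j} S)) * gammaS n S $$ (a, b)))"

(* G^Om(q,X); q \<in> {+-1}^n indexed by j \<in> [n] (q_R with R = {2j-1,2j}) *)
definition G_op :: "nat \<Rightarrow> (nat \<Rightarrow> nat \<Rightarrow> real) \<Rightarrow> (nat \<Rightarrow> int) \<Rightarrow> nat set \<Rightarrow> complex mat" where
  "G_op n Om q X = complex_of_real ((2 ^ (2*n)) ^ (n - 1)) \<cdot>\<^sub>m
     foldr (*) (map (G_factor n Om q X) [1..<n+1]) (1\<^sub>m (2^n))"

definition q_set :: "nat \<Rightarrow> (nat \<Rightarrow> int) set" where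
  "q_set n = PiE {1..n} (\<lambda>_. {-1, 1})"

definition M_op :: "nat \<Rightarrow> real \<Rightarrow> nat set \<Rightarrow> int \<Rightarrow> complex mat" where
  "M_op n \<eta> S e = complex_of_real (1/2) \<cdot>\<^sub>m
     (1\<^sub>m (2^n) + complex_of_real (of_int e * \<eta>) \<cdot>\<^sub>m gammaS n S)"

definition jointly_measures :: "nat \<Rightarrow> ((nat \<Rightarrow> int) \<Rightarrow> nat set \<Rightarrow> complex mat) \<Rightarrow> (int \<Rightarrow> complex mat) \<Rightarrow> bool" where
  "jointly_measures n G M \<longleftrightarrow> (\<exists>p :: (nat \<Rightarrow> int) \<Rightarrow> nat set \<Rightarrow> int \<Rightarrow> real.
     (\<forall>q\<in>q_set n. \<forall>X\<in>Pow (idx2 n). (\<forall>e\<in>{-1, 1}. p q X e \<ge> 0) \<and> (\<Sum>e\<in>{-1, 1}. p q X e) = 1) \<and>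
     (\<forall>e\<in>{-1, 1}. M e = mat (2^n) (2^n) (\<lambda>(a, b).
        \<Sum>q\<in>q_set n. \<Sum>X\<in>Pow (idx2 n). complex_of_real (p q X e) * G q X $$ (a, b))))"

end

theory Submission
  imports Defs
begin

text \<open>
  Each column \<open>s \<in> S\<close> lies in its own block \<open>C\<^sub>i\<close>, and the only rows meeting it are those
  of \<open>B\<^sub>i\<close>. Pairing the columns of \<open>S\<close> arbitrarily, the sparse arrangement of \<open>\<M>\<close> gives
  for each pair an edge joining the two corresponding \<open>B\<close>-blocks; its endpoints serve as
  the rows \<open>\<rho>(s)\<close>. Then \<open>O\<^bsub>\<rho>(s),s'\<^esub> \<noteq> 0\<close> iff \<open>s = s'\<close>, so \<open>O\<^bsub>R,S\<^esub>\<close> is monomial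
  and \<open>|det O\<^bsub>R,S\<^esub>|\<close> is a product of \<open>2k\<close> entries of size at least \<open>c / \<surd>\<ell>\<close>.

  For the measurement, expand \<open>G(q, X)\<close> as a product over the Majorana pairs. Weighting
  the outcomes by the character \<open>x\<^sub>S(X) \<Prod>\<^sub>j\<^sub>\<in>\<^sub>J q\<^sub>j\<close> and summing, the average over \<open>q\<close>
  keeps only the pair operators of \<open>\<pi>(R)\<close>, and the average over \<open>X\<close> keeps only those terms
  of their expansion in which every index is used an even number of times together with
  \<open>S\<close>. By the monomiality of \<open>O\<^bsub>R,S\<^esub>\<close> the only surviving term is \<open>\<plusminus>det(O\<^bsub>R,S\<^esub>) \<gamma>\<^sub>S\<close>,
  so post-processing the outcome to that character's sign yields \<open>M\<^sup>\<eta>\<^sub>S\<close>.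
\<close>

section \<open>Square matrices and finite sums of matrices\<close>

lemma smult_smult_mat: "a \<cdot>\<^sub>m (b \<cdot>\<^sub>m A) = (a * b :: 'a :: semigroup_mult) \<cdot>\<^sub>m A"
  by (rule eq_matI) (auto simp: mult.assoc)

lemma one_smult_mat [simp]: "(1 :: 'a :: monoid_mult) \<cdot>\<^sub>m A = A"
  by (rule eq_matI) auto

text \<open>Library facts specialised to square matrices, with a single dimension \<open>N\<close>; where
  the simplifier cannot infer \<open>N\<close>, it is supplied with \<open>where\<close>.\<close>

lemma square_mult_carrier [simp]:
  "A \<in> carrier_mat N N \<Longrightarrow> B \<in> carrier_mat N N \<Longrightarrow> A * B \<in> carrier_mat N N"
  by (rule mult_carrier_mat)

lemma square_one_mult [simp]: "(A :: 'a :: semiring_1 mat) \<in> carrier_mat N N \<Longrightarrow> 1\<^sub>m N * A = A"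
  by (rule left_mult_one_mat)

lemma square_mult_one [simp]: "(A :: 'a :: semiring_1 mat) \<in> carrier_mat N N \<Longrightarrow> A * 1\<^sub>m N = A"
  by (rule right_mult_one_mat)

lemma square_smult_mult [simp]:
  "(A :: 'a :: comm_ring_1 mat) \<in> carrier_mat N N \<Longrightarrow> B \<in> carrier_mat N N \<Longrightarrow> (k \<cdot>\<^sub>m A) * B = k \<cdot>\<^sub>m (A * B)"
  by (rule mult_smult_assoc_mat)

lemma square_mult_smult [simp]:
  "(A :: 'a :: comm_ring_1 mat) \<in> carrier_mat N N \<Longrightarrow> B \<in> carrier_mat N N \<Longrightarrow> A * (k \<cdot>\<^sub>m B) = k \<cdot>\<^sub>m (A * B)"
  by (rule mult_smult_distrib)

lemma square_mult_assoc:
  "(A :: 'a :: semiring_0 mat) \<in> carrier_mat N N \<Longrightarrow> B \<in> carrier_mat N N \<Longrightarrow> C \<in> carrier_mat N N \<Longrightarrow>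
   (A * B) * C = A * (B * C)"
  by (rule assoc_mult_mat)

lemma index_mult_square_mat:
  "A \<in> carrier_mat N N \<Longrightarrow> B \<in> carrier_mat N N \<Longrightarrow> x < N \<Longrightarrow> y < N \<Longrightarrow>
   (A * B) $$ (x, y) = (\<Sum>z<N. A $$ (x, z) * B $$ (z, y))"
  by (simp add: scalar_prod_def atLeast0LessThan)

lemma foldr_mult_carrier:
  "(\<And>j. j \<in> set js \<Longrightarrow> F j \<in> carrier_mat N N) \<Longrightarrow>
   foldr (*) (map F js) (1\<^sub>m N) \<in> carrier_mat N N"
  for F :: "_ \<Rightarrow> 'a :: semiring_1 mat"
  by (induction js) auto

lemma foldr_mult_one_mat: "foldr (*) (map (\<lambda>j. 1\<^sub>m N) js) (1\<^sub>m N) = (1\<^sub>m N :: 'a :: semiring_1 mat)"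
  by (induction js) auto

lemma foldr_mult_smult:
  fixes F :: "'j \<Rightarrow> 'a :: comm_ring_1 mat"
  assumes "distinct js" "\<And>j. j \<in> set js \<Longrightarrow> F j \<in> carrier_mat N N"
  shows "foldr (*) (map (\<lambda>j. c j \<cdot>\<^sub>m F j) js) (1\<^sub>m N) = (\<Prod>j\<in>set js. c j) \<cdot>\<^sub>m foldr (*) (map F js) (1\<^sub>m N)"
  using assms
proof (induction js)
  case (Cons j js)
  then have "foldr (*) (map F js) (1\<^sub>m N) \<in> carrier_mat N N" "F j \<in> carrier_mat N N"
    by (auto intro!: foldr_mult_carrier)
  with Cons show ?case
    by (simp add: smult_smult_mat square_smult_mult[where N=N] square_mult_smult[where N=N] mult.commute)
qed simp

definition mat_sum :: "nat \<Rightarrow> ('b \<Rightarrow> 'a :: comm_ring_1 mat) \<Rightarrow> 'b set \<Rightarrow> 'a mat" where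
  "mat_sum N F A = mat N N (\<lambda>(a, b). \<Sum>x\<in>A. F x $$ (a, b))"

lemma mat_sum_carrier [simp]: "mat_sum N F A \<in> carrier_mat N N"
  unfolding mat_sum_def by simp

lemma dim_mat_sum [simp]: "dim_row (mat_sum N F A) = N" "dim_col (mat_sum N F A) = N"
  unfolding mat_sum_def by auto

lemma index_mat_sum: "a < N \<Longrightarrow> b < N \<Longrightarrow> mat_sum N F A $$ (a, b) = (\<Sum>x\<in>A. F x $$ (a, b))"
  unfolding mat_sum_def by simp

lemma mat_sum_cong: "(\<And>x. x \<in> A \<Longrightarrow> F x = G x) \<Longrightarrow> mat_sum N F A = mat_sum N G A"
  unfolding mat_sum_def by (auto intro!: cong_mat sum.cong)

lemma mat_sum_singleton: "F x \<in> carrier_mat N N \<Longrightarrow> mat_sum N F {x} = F x"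
  unfolding mat_sum_def by (rule eq_matI) auto

lemma mat_sum_reindex: "inj_on h A \<Longrightarrow> mat_sum N F (h ` A) = mat_sum N (\<lambda>x. F (h x)) A"
  unfolding mat_sum_def by (rule cong_mat) (auto simp: sum.reindex)

lemma mat_sum_Sigma: "mat_sum N (\<lambda>x. mat_sum N (G x) B) A = mat_sum N (\<lambda>(x, y). G x y) (A \<times> B)"
  unfolding mat_sum_def by (rule cong_mat) (auto simp: sum.cartesian_product split_beta)

lemma mat_sum_swap: "mat_sum N (\<lambda>x. mat_sum N (H x) B) A = mat_sum N (\<lambda>y. mat_sum N (\<lambda>x. H x y) A) B"
  unfolding mat_sum_def by (rule eq_matI) (auto intro: sum.swap)

lemma mat_sum_add:
  assumes "\<And>x. x \<in> A \<Longrightarrow> F x \<in> carrier_mat N N" "\<And>x. x \<in> A \<Longrightarrow> G x \<in> carrier_mat N N"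
  shows "mat_sum N (\<lambda>x. F x + G x) A = mat_sum N F A + mat_sum N G A"
proof -
  have "dim_row (G x) = N" "dim_col (G x) = N" if "x \<in> A" for x
    using assms that by auto
  then show ?thesis by (intro eq_matI) (auto simp: index_mat_sum sum.distrib intro!: sum.cong)
qed

lemma mat_sum_smult:
  assumes "\<And>x. x \<in> A \<Longrightarrow> F x \<in> carrier_mat N N"
  shows "mat_sum N (\<lambda>x. c \<cdot>\<^sub>m F x) A = c \<cdot>\<^sub>m mat_sum N F A"
proof -
  have "dim_row (F x) = N" "dim_col (F x) = N" if "x \<in> A" for x
    using assms that by auto
  then show ?thesis by (intro eq_matI) (auto simp: index_mat_sum sum_distrib_left intro!: sum.cong)
qed

lemma mat_sum_smult_const: "B \<in> carrier_mat N N \<Longrightarrow> mat_sum N (\<lambda>x. c x \<cdot>\<^sub>m B) A = (\<Sum>x\<in>A. c x) \<cdot>\<^sub>m B"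
  unfolding mat_sum_def by (rule eq_matI) (auto simp: sum_distrib_right)

lemma mat_sum_single_nonzero:
  assumes "finite A" "x\<^sub>0 \<in> A" "\<And>x. x \<in> A \<Longrightarrow> x \<noteq> x\<^sub>0 \<Longrightarrow> w x = 0"
    and "\<And>x. x \<in> A \<Longrightarrow> F x \<in> carrier_mat N N"
  shows "mat_sum N (\<lambda>x. w x \<cdot>\<^sub>m F x) A = w x\<^sub>0 \<cdot>\<^sub>m F x\<^sub>0"
proof (rule eq_matI)
  have dims: "dim_row (F x) = N" "dim_col (F x) = N" if "x \<in> A" for x
    using assms that by auto
  fix i j assume "i < dim_row (w x\<^sub>0 \<cdot>\<^sub>m F x\<^sub>0)" "j < dim_col (w x\<^sub>0 \<cdot>\<^sub>m F x\<^sub>0)"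
  then have "i < N" "j < N" using dims assms(2) by auto
  then show "mat_sum N (\<lambda>x. w x \<cdot>\<^sub>m F x) A $$ (i, j) = (w x\<^sub>0 \<cdot>\<^sub>m F x\<^sub>0) $$ (i, j)"
    using assms dims by (simp add: index_mat_sum sum.remove[of A x\<^sub>0] sum.neutral)
qed (use assms in auto)

lemma mat_sum_mult_left:
  assumes B: "B \<in> carrier_mat N N" and F: "\<And>x. x \<in> A \<Longrightarrow> F x \<in> carrier_mat N N"
  shows "B * mat_sum N F A = mat_sum N (\<lambda>x. B * F x) A"
proof (rule eq_matI)
  fix i j assume "i < dim_row (mat_sum N (\<lambda>x. B * F x) A)" "j < dim_col (mat_sum N (\<lambda>x. B * F x) A)"
  then have i: "i < N" and j: "j < N" by auto
  have "(B * mat_sum N F A) $$ (i, j) = (\<Sum>z<N. B $$ (i, z) * (\<Sum>x\<in>A. F x $$ (z, j)))"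
    using index_mult_square_mat[OF B mat_sum_carrier i j] by (simp add: index_mat_sum j)
  also have "\<dots> = (\<Sum>x\<in>A. (B * F x) $$ (i, j))"
    by (simp add: sum_distrib_left sum.swap[of _ A] index_mult_square_mat[OF B F i j])
  finally show "(B * mat_sum N F A) $$ (i, j) = mat_sum N (\<lambda>x. B * F x) A $$ (i, j)"
    by (simp add: index_mat_sum i j)
qed (use B in auto)

lemma mat_sum_mult_right:
  assumes B: "B \<in> carrier_mat N N" and F: "\<And>x. x \<in> A \<Longrightarrow> F x \<in> carrier_mat N N"
  shows "mat_sum N F A * B = mat_sum N (\<lambda>x. F x * B) A"
proof (rule eq_matI)
  fix i j assume "i < dim_row (mat_sum N (\<lambda>x. F x * B) A)" "j < dim_col (mat_sum N (\<lambda>x. F x * B) A)"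
  then have i: "i < N" and j: "j < N" by auto
  have "(mat_sum N F A * B) $$ (i, j) = (\<Sum>z<N. (\<Sum>x\<in>A. F x $$ (i, z)) * B $$ (z, j))"
    using index_mult_square_mat[OF mat_sum_carrier B i j] by (simp add: index_mat_sum i)
  also have "\<dots> = (\<Sum>x\<in>A. (F x * B) $$ (i, j))"
    by (simp add: sum_distrib_right sum.swap[of _ A] index_mult_square_mat[OF F B i j])
  finally show "(mat_sum N F A * B) $$ (i, j) = mat_sum N (\<lambda>x. F x * B) A $$ (i, j)"
    by (simp add: index_mat_sum i j)
qed (use B in auto)

lemma mat_sum_mult:
  assumes "\<And>x. x \<in> A \<Longrightarrow> F x \<in> carrier_mat N N" "\<And>y. y \<in> B \<Longrightarrow> G y \<in> carrier_mat N N"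
  shows "mat_sum N F A * mat_sum N G B = mat_sum N (\<lambda>(x, y). F x * G y) (A \<times> B)"
proof -
  have "mat_sum N F A * mat_sum N G B = mat_sum N (\<lambda>x. F x * mat_sum N G B) A"
    using assms by (simp add: mat_sum_mult_right)
  also have "\<dots> = mat_sum N (\<lambda>x. mat_sum N (\<lambda>y. F x * G y) B) A"
    using assms by (intro mat_sum_cong) (simp add: mat_sum_mult_left)
  finally show ?thesis by (simp add: mat_sum_Sigma)
qed

lemma foldr_mult_mat_sum:
  fixes F :: "'j \<Rightarrow> 't \<Rightarrow> 'a :: comm_ring_1 mat"
  assumes "distinct js" and F: "\<And>j t. j \<in> set js \<Longrightarrow> t \<in> A j \<Longrightarrow> F j t \<in> carrier_mat N N"
  shows "foldr (*) (map (\<lambda>j. mat_sum N (F j) (A j)) js) (1\<^sub>m N) =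
         mat_sum N (\<lambda>f. foldr (*) (map (\<lambda>j. F j (f j)) js) (1\<^sub>m N)) (PiE (set js) A)"
  using assms
proof (induction js)
  case Nil
  then show ?case by (simp add: mat_sum_singleton)
next
  case (Cons j js)
  let ?prod = "\<lambda>js f. foldr (*) (map (\<lambda>j. F j (f j)) js) (1\<^sub>m N)"
  have j: "j \<notin> set js" using Cons.prems by simp
  have "foldr (*) (map (\<lambda>j. mat_sum N (F j) (A j)) (j # js)) (1\<^sub>m N)
      = mat_sum N (F j) (A j) * mat_sum N (?prod js) (PiE (set js) A)"
    using Cons by simp
  also have "\<dots> = mat_sum N (\<lambda>(t, f). F j t * ?prod js f) (A j \<times> PiE (set js) A)"
    by (rule mat_sum_mult) (auto intro!: foldr_mult_carrier Cons.prems(2))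
  also have "\<dots> = mat_sum N (\<lambda>x. ?prod (j # js) ((\<lambda>(t, g). g(j := t)) x)) (A j \<times> PiE (set js) A)"
  proof (rule mat_sum_cong, clarify)
    fix t g
    have "map (\<lambda>j'. F j' ((g(j := t)) j')) js = map (\<lambda>j'. F j' (g j')) js"
      using j by (auto intro!: map_cong)
    then show "F j t * ?prod js g = ?prod (j # js) (g(j := t))"
      by (simp only: list.map foldr_Cons o_apply fun_upd_same)
  qed
  also have "\<dots> = mat_sum N (?prod (j # js)) (PiE (set (j # js)) A)"
    by (simp only: set_simps PiE_insert_eq mat_sum_reindex[OF inj_combinator[OF j]])
  finally show ?case .
qed

lemma mat_double_sum_eq_mat_sum:
  assumes "\<And>q X. q \<in> Q \<Longrightarrow> X \<in> P \<Longrightarrow> F q X \<in> carrier_mat N N"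
  shows "mat N N (\<lambda>(a, b). \<Sum>q\<in>Q. \<Sum>X\<in>P. c q X * F q X $$ (a, b)) =
         mat_sum N (\<lambda>X. mat_sum N (\<lambda>q. c q X \<cdot>\<^sub>m F q X) Q) P"
proof -
  have "dim_row (F q X) = N" "dim_col (F q X) = N" if "q \<in> Q" "X \<in> P" for q X
    using assms that by auto
  then show ?thesis
    by (intro eq_matI) (auto simp: index_mat_sum sum.swap[of _ Q] intro!: sum.cong)
qed

section \<open>Majorana operators\<close>

lemma flip_bit_less_exp:
  fixes b :: nat
  assumes "q < n" "b < 2 ^ n"
  shows "flip_bit q b < 2 ^ n"
proof -
  have "take_bit n b = b" using assms by (simp add: take_bit_nat_eq_self_iff)
  then have "take_bit n (flip_bit q b) = flip_bit q b"
    by (intro bit_eqI) (use assms in \<open>auto simp: bit_take_bit_iff bit_flip_bit_iff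
        dest: arg_cong[where f="\<lambda>x. bit x _"]\<close>)
  then show ?thesis by (metis take_bit_nat_less_exp)
qed

lemma flip_bit_commute: "flip_bit p (flip_bit q b) = flip_bit q (flip_bit p (b :: nat))"
  by (rule bit_eqI) (auto simp: bit_flip_bit_iff)

text \<open>The Jordan--Wigner string \<open>Z \<otimes> \<dots> \<otimes> Z\<close> on the qubits below \<open>q\<close> acts on the basis
  vector \<open>b\<close> by the sign \<open>jw_sign q b\<close>.\<close>

definition jw_sign :: "nat \<Rightarrow> nat \<Rightarrow> complex" where
  "jw_sign q b = (-1) ^ card {l. l < q \<and> bit b l}"

definition maj_phase :: "nat \<Rightarrow> nat \<Rightarrow> complex" where
  "maj_phase m b = (if odd m then jw_sign ((m - 1) div 2) b
     else \<i> * (if bit b ((m - 1) div 2) then -1 else 1) * jw_sign ((m - 1) div 2) b)"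

lemma maj_carrier [simp]: "maj n m \<in> carrier_mat (2 ^ n) (2 ^ n)"
  unfolding maj_def by simp

lemma dim_maj [simp]: "dim_row (maj n m) = 2 ^ n" "dim_col (maj n m) = 2 ^ n"
  unfolding maj_def by simp_all

lemma maj_index:
  "a < 2 ^ n \<Longrightarrow> b < 2 ^ n \<Longrightarrow>
   maj n m $$ (a, b) = (if a = flip_bit ((m - 1) div 2) b then maj_phase m b else 0)"
  unfolding maj_def maj_phase_def jw_sign_def by (simp add: Let_def)

lemma index_mult_maj:
  assumes A: "A \<in> carrier_mat (2 ^ n) (2 ^ n)" and xy: "x < 2 ^ n" "y < 2 ^ n"
    and q: "(m - 1) div 2 < n"
  shows "(A * maj n m) $$ (x, y) = A $$ (x, flip_bit ((m - 1) div 2) y) * maj_phase m y"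
proof -
  have "(A * maj n m) $$ (x, y) = (\<Sum>z<2 ^ n. A $$ (x, z) * maj n m $$ (z, y))"
    using index_mult_square_mat[OF A maj_carrier xy] .
  also have "\<dots> = (\<Sum>z<2 ^ n. if z = flip_bit ((m - 1) div 2) y then A $$ (x, z) * maj_phase m y else 0)"
    by (rule sum.cong) (auto simp: maj_index xy)
  finally show ?thesis
    using flip_bit_less_exp[OF q xy(2)] by simp
qed

lemma jw_sign_flip_bit_ge: "q \<le> p \<Longrightarrow> jw_sign q (flip_bit p b) = jw_sign q b"
  unfolding jw_sign_def
  by (rule arg_cong[where f="\<lambda>x. (-1) ^ card x"]) (auto simp: bit_flip_bit_iff)

lemma jw_sign_flip_bit_less:
  assumes "p < q"
  shows "jw_sign q (flip_bit p b) = - jw_sign q b"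
proof -
  let ?A = "{l. l < q \<and> bit b l}"
  have eq: "{l. l < q \<and> bit (flip_bit p b) l} = (if bit b p then ?A - {p} else insert p ?A)"
    using assms by (auto simp: bit_flip_bit_iff)
  show ?thesis
  proof (cases "bit b p")
    case True
    then have "card ?A = Suc (card (?A - {p}))"
      using assms by (intro card_Suc_Diff1[symmetric]) auto
    then show ?thesis unfolding jw_sign_def eq using True by simp
  next
    case False
    then show ?thesis unfolding jw_sign_def eq by simp
  qed
qed

text \<open>Either the two Majoranas act on different qubits, and exactly one Jordan--Wigner string
  crosses the other qubit, or they are the pair \<open>X, Y\<close> on the same qubit.\<close>

lemma maj_phase_anticommute:
  assumes "a < b" "1 \<le> a"
  shows "maj_phase a (flip_bit ((b - 1) div 2) y) * maj_phase b y
       = - (maj_phase b (flip_bit ((a - 1) div 2) y) * maj_phase a y)"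
proof -
  define qa where "qa = (a - 1) div 2"
  define qb where "qb = (b - 1) div 2"
  have "qa \<le> qb" unfolding qa_def qb_def using assms by (simp add: div_le_mono)
  then consider "qa < qb" | "qa = qb" by linarith
  then show ?thesis
  proof cases
    case 1
    then show ?thesis
      unfolding maj_phase_def qa_def[symmetric] qb_def[symmetric]
      by (simp add: jw_sign_flip_bit_ge jw_sign_flip_bit_less bit_flip_bit_iff)
  next
    case 2
    then have "odd a" "even b" using assms unfolding qa_def qb_def by presburger+
    then show ?thesis
      unfolding maj_phase_def qa_def[symmetric] qb_def[symmetric] 2
      by (simp add: jw_sign_flip_bit_ge bit_flip_bit_iff)
  qed
qed

lemma maj_anticommute_less:
  assumes ab: "1 \<le> a" "a < b" "b \<le> 2 * n"
  shows "maj n a * maj n b = (-1) \<cdot>\<^sub>m (maj n b * maj n a)"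
proof (rule eq_matI)
  have qa: "(a - 1) div 2 < n" and qb: "(b - 1) div 2 < n" using ab by auto
  fix x y
  assume "x < dim_row ((-1) \<cdot>\<^sub>m (maj n b * maj n a))" "y < dim_col ((-1) \<cdot>\<^sub>m (maj n b * maj n a))"
  then have x: "x < 2 ^ n" and y: "y < 2 ^ n" by auto
  show "(maj n a * maj n b) $$ (x, y) = ((-1) \<cdot>\<^sub>m (maj n b * maj n a)) $$ (x, y)"
    using x y flip_bit_less_exp[OF qa y] flip_bit_less_exp[OF qb y]
      maj_phase_anticommute[OF ab(2) ab(1), of y]
    by (simp add: index_mult_maj[OF maj_carrier x y qb] index_mult_maj[OF maj_carrier x y qa]
        maj_index flip_bit_commute)
qed auto

lemma maj_anticommute:
  assumes "1 \<le> a" "a \<le> 2 * n" "1 \<le> b" "b \<le> 2 * n" "a \<noteq> b"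
  shows "maj n a * maj n b = (-1) \<cdot>\<^sub>m (maj n b * maj n a)"
proof (cases "a < b")
  case True
  then show ?thesis using maj_anticommute_less assms by blast
next
  case False
  then have "maj n b * maj n a = (-1) \<cdot>\<^sub>m (maj n a * maj n b)"
    using maj_anticommute_less assms by auto
  then show ?thesis by (simp add: smult_smult_mat)
qed

definition maj_prod :: "nat \<Rightarrow> nat list \<Rightarrow> complex mat" where
  "maj_prod n xs = foldr (*) (map (maj n) xs) (1\<^sub>m (2 ^ n))"

lemma maj_prod_carrier [simp]: "maj_prod n xs \<in> carrier_mat (2 ^ n) (2 ^ n)"
  unfolding maj_prod_def by (induction xs) auto

lemma maj_prod_Nil [simp]: "maj_prod n [] = 1\<^sub>m (2 ^ n)"
  unfolding maj_prod_def by simp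

lemma maj_prod_Cons: "maj_prod n (x # xs) = maj n x * maj_prod n xs"
  unfolding maj_prod_def by simp

lemma maj_prod_append: "maj_prod n (xs @ ys) = maj_prod n xs * maj_prod n ys"
  by (induction xs) (simp_all add: maj_prod_Cons square_mult_assoc[where N="2 ^ n"])

lemma maj_mult_maj_prod_insort:
  assumes "x \<notin> set ys" "x \<in> {1..2 * n}" "set ys \<subseteq> {1..2 * n}"
  shows "\<exists>s \<in> {1, -1 :: complex}. maj n x * maj_prod n ys = s \<cdot>\<^sub>m maj_prod n (insort x ys)"
  using assms
proof (induction ys)
  case Nil
  then show ?case by (intro bexI[of _ 1]) (auto simp: maj_prod_Cons)
next
  case (Cons y ys)
  show ?case
  proof (cases "x \<le> y")
    case True
    then show ?thesis by (intro bexI[of _ 1]) (auto simp: maj_prod_Cons)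
  next
    case False
    have "\<exists>s \<in> {1, -1 :: complex}. maj n x * maj_prod n ys = s \<cdot>\<^sub>m maj_prod n (insort x ys)"
      using Cons.prems by (intro Cons.IH) auto
    then obtain s where s: "s \<in> {1, -1}" "maj n x * maj_prod n ys = s \<cdot>\<^sub>m maj_prod n (insort x ys)"
      by blast
    have "maj n x * maj_prod n (y # ys) = (maj n x * maj n y) * maj_prod n ys"
      by (simp add: maj_prod_Cons square_mult_assoc[where N="2 ^ n"])
    also have "\<dots> = ((-1) \<cdot>\<^sub>m (maj n y * maj n x)) * maj_prod n ys"
      using maj_anticommute[of x n y] Cons.prems by auto
    also have "\<dots> = (-1) \<cdot>\<^sub>m (maj n y * (maj n x * maj_prod n ys))"
      by (simp add: square_mult_assoc[where N="2 ^ n"] square_smult_mult[where N="2 ^ n"])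
    also have "\<dots> = (-s) \<cdot>\<^sub>m maj_prod n (insort x (y # ys))"
      using False s(2) by (simp add: maj_prod_Cons smult_smult_mat square_mult_smult[where N="2 ^ n"])
    finally show ?thesis using s by (intro bexI[of _ "-s"]) auto
  qed
qed

lemma maj_prod_sort:
  assumes "distinct xs" "set xs \<subseteq> {1..2 * n}"
  shows "\<exists>s \<in> {1, -1 :: complex}. maj_prod n xs = s \<cdot>\<^sub>m maj_prod n (sort xs)"
  using assms
proof (induction xs)
  case Nil
  then show ?case by (intro bexI[of _ 1]) auto
next
  case (Cons x xs)
  have "\<exists>s \<in> {1, -1 :: complex}. maj_prod n xs = s \<cdot>\<^sub>m maj_prod n (sort xs)"
    using Cons.prems by (intro Cons.IH) auto
  then obtain s where s: "s \<in> {1, -1}" "maj_prod n xs = s \<cdot>\<^sub>m maj_prod n (sort xs)"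
    by blast
  obtain s' where s': "s' \<in> {1, -1 :: complex}"
    "maj n x * maj_prod n (sort xs) = s' \<cdot>\<^sub>m maj_prod n (insort x (sort xs))"
    using maj_mult_maj_prod_insort[of x "sort xs" n] Cons.prems by fastforce
  have "maj_prod n (x # xs) = (s * s') \<cdot>\<^sub>m maj_prod n (sort (x # xs))"
    using s(2) s' by (simp add: maj_prod_Cons smult_smult_mat square_mult_smult[where N="2 ^ n"])
  then show ?case using s s' by (intro bexI[of _ "s * s'"]) auto
qed

lemma gammaS_eq_maj_prod: "gammaS n T = (\<i> ^ (card T choose 2)) \<cdot>\<^sub>m maj_prod n (sorted_list_of_set T)"
  unfolding gammaS_def maj_prod_def ..

lemma gammaS_carrier [simp]: "gammaS n T \<in> carrier_mat (2 ^ n) (2 ^ n)"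
  unfolding gammaS_eq_maj_prod by simp

lemma dim_gammaS [simp]: "dim_row (gammaS n T) = 2 ^ n" "dim_col (gammaS n T) = 2 ^ n"
  using gammaS_carrier[of n T] unfolding carrier_mat_def by auto

lemma gammaS_empty [simp]: "gammaS n {} = 1\<^sub>m (2 ^ n)"
  unfolding gammaS_eq_maj_prod by (simp add: numeral_2_eq_2)

lemma foldr_gammaS:
  "foldr (*) (map (gammaS n) Ts) (1\<^sub>m (2 ^ n)) =
   (\<i> ^ (\<Sum>T\<leftarrow>Ts. card T choose 2)) \<cdot>\<^sub>m maj_prod n (concat (map sorted_list_of_set Ts))"
  by (induction Ts)
    (simp_all add: gammaS_eq_maj_prod maj_prod_append smult_smult_mat power_add mult.commute
      square_smult_mult[where N="2 ^ n"] square_mult_smult[where N="2 ^ n"])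

lemma imaginary_unit_pow_choose_2: "\<i> ^ (2 * k choose 2) = \<i> ^ k"
proof -
  have "even (k * (k - 1))" by (cases "even k") auto
  then obtain m where "k * (k - 1) = 2 * m" by blast
  moreover have "2 * k choose 2 = k + 2 * (k * (k - 1))"
    by (cases k) (auto simp: choose_two algebra_simps)
  ultimately have "\<i> ^ (2 * k choose 2) = \<i> ^ k * (\<i> ^ 4) ^ m"
    by (simp add: power_add power_mult[symmetric] mult.commute)
  then show ?thesis by simp
qed

text \<open>Reordering the concatenated Majoranas costs only a sign.\<close>

lemma foldr_gammaS_disjoint:
  assumes fin: "\<forall>T \<in> set Ts. finite T \<and> T \<subseteq> {1..2 * n}"
    and dist: "distinct (concat (map sorted_list_of_set Ts))"
    and pairs: "(\<Sum>T\<leftarrow>Ts. card T choose 2) = k"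
    and card: "card (\<Union>(set Ts)) = 2 * k"
  shows "\<exists>s \<in> {1, -1 :: complex}. foldr (*) (map (gammaS n) Ts) (1\<^sub>m (2 ^ n)) = s \<cdot>\<^sub>m gammaS n (\<Union>(set Ts))"
proof -
  let ?c = "concat (map sorted_list_of_set Ts)"
  have set_c: "set ?c = \<Union>(set Ts)" using fin by auto
  obtain s where s: "s \<in> {1, -1 :: complex}" "maj_prod n ?c = s \<cdot>\<^sub>m maj_prod n (sort ?c)"
    using maj_prod_sort[OF dist, of n] fin set_c by fastforce
  have sort_c: "sort ?c = sorted_list_of_set (\<Union>(set Ts))"
    using dist set_c by (metis sorted_list_of_set_sort_remdups distinct_remdups_id)
  have "gammaS n (\<Union>(set Ts)) = \<i> ^ k \<cdot>\<^sub>m maj_prod n (sorted_list_of_set (\<Union>(set Ts)))"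
    unfolding gammaS_eq_maj_prod card imaginary_unit_pow_choose_2 ..
  then show ?thesis
    using s unfolding foldr_gammaS pairs sort_c
    by (intro bexI[of _ s]) (auto simp: smult_smult_mat mult.commute)
qed

section \<open>Monomial submatrices\<close>

lemma submat_RS_carrier: "submat_RS Om R S \<in> carrier_mat (card R) (card S)"
  unfolding submat_RS_def by simp

lemma index_submat_RS:
  "i < card R \<Longrightarrow> i' < card S \<Longrightarrow>
   submat_RS Om R S $$ (i, i') = Om (sorted_list_of_set R ! i) (sorted_list_of_set S ! i')"
  unfolding submat_RS_def by simp

lemma det_zero_row:
  fixes A :: "'a :: comm_ring_1 mat"
  assumes A: "A \<in> carrier_mat m m" and k: "k < m" and zero: "\<And>i. i < m \<Longrightarrow> A $$ (k, i) = 0"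
  shows "det A = 0"
proof -
  have "(\<Prod>i = 0..<m. A $$ (i, p i)) = 0" if "p permutes {0..<m}" for p
    using k zero permutes_in_image[OF that, of k] by (intro prod_zero[OF _ bexI[of _ k]]) auto
  then show ?thesis unfolding det_def'[OF A] by simp
qed

lemma det_eq_single_term:
  fixes A :: "'a :: comm_ring_1 mat"
  assumes A: "A \<in> carrier_mat m m" and p: "p permutes {0..<m}"
    and zero: "\<And>q. q permutes {0..<m} \<Longrightarrow> q \<noteq> p \<Longrightarrow> \<exists>i<m. A $$ (i, q i) = 0"
  shows "det A = signof p * (\<Prod>i = 0..<m. A $$ (i, p i))"
proof -
  have "(\<Prod>i = 0..<m. A $$ (i, q i)) = 0" if q: "q permutes {0..<m}" "q \<noteq> p" for q
  proof -
    obtain i where "i < m" "A $$ (i, q i) = 0" using zero[OF q] by blast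
    then show ?thesis by (intro prod_zero[OF _ bexI[of _ i]]) auto
  qed
  then have "(\<Sum>q\<in>{q. q permutes {0..<m}} - {p}. signof q * (\<Prod>i = 0..<m. A $$ (i, q i))) = 0"
    by (intro sum.neutral) auto
  then show ?thesis
    unfolding det_def'[OF A] using p
    by (subst sum.remove[of _ p]) (simp_all add: finite_permutations)
qed

lemma permutes_align_sorted_list_of_set:
  assumes fin: "finite S" and inj: "inj_on \<rho> S"
  shows "\<exists>p. p permutes {0..<card S} \<and>
    (\<forall>i < card S. \<rho> (sorted_list_of_set S ! p i) = sorted_list_of_set (\<rho> ` S) ! i)"
proof -
  let ?m = "card S" and ?cs = "sorted_list_of_set S" and ?rs = "sorted_list_of_set (\<rho> ` S)"
  have cs: "bij_betw ((!) ?cs) {..<?m} S" using fin by (intro bij_betw_nth) auto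
  have rs: "bij_betw ((!) ?rs) {..<?m} (\<rho> ` S)"
    using fin card_image[OF inj] by (intro bij_betw_nth) auto
  have "bij_betw (inv_into S \<rho>) (\<rho> ` S) S" using inj by (simp add: bij_betw_inv_into inj_on_imp_bij_betw)
  then have bij: "bij_betw (inv_into {..<?m} ((!) ?cs) \<circ> inv_into S \<rho> \<circ> (!) ?rs) {..<?m} {..<?m}"
    using cs rs by (intro bij_betw_trans bij_betw_inv_into)
  define p where "p i = (if i < ?m then (inv_into {..<?m} ((!) ?cs) \<circ> inv_into S \<rho> \<circ> (!) ?rs) i else i)" for i
  have "bij_betw p {..<?m} {..<?m}"
    using bij by (rule bij_betw_cong[THEN iffD1, rotated]) (simp add: p_def)
  then have "p permutes {0..<?m}"
    by (intro bij_imp_permutes) (auto simp: p_def atLeast0LessThan)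
  moreover have "\<rho> (?cs ! p i) = ?rs ! i" if "i < ?m" for i
  proof -
    have "?rs ! i \<in> \<rho> ` S" using rs that by (auto simp: bij_betw_def)
    moreover have "inv_into S \<rho> (?rs ! i) \<in> S" using calculation by (rule inv_into_into)
    ultimately show ?thesis
      using cs that unfolding p_def by (simp add: bij_betw_inv_into_right f_inv_into_f)
  qed
  ultimately show ?thesis by blast
qed

lemma abs_det_submat_RS_monomial:
  fixes Om :: "nat \<Rightarrow> nat \<Rightarrow> real"
  assumes fin: "finite S" and inj: "inj_on \<rho> S"
    and monomial: "\<forall>s\<in>S. \<forall>s'\<in>S. Om (\<rho> s) s' \<noteq> 0 \<longleftrightarrow> s = s'"
  shows "\<bar>det (submat_RS Om (\<rho> ` S) S)\<bar> = (\<Prod>s\<in>S. \<bar>Om (\<rho> s) s\<bar>)"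
proof -
  define m where "m = card S"
  define cs where "cs = sorted_list_of_set S"
  define A where "A = submat_RS Om (\<rho> ` S) S"
  obtain p where p: "p permutes {0..<m}" "\<And>i. i < m \<Longrightarrow> \<rho> (cs ! p i) = sorted_list_of_set (\<rho> ` S) ! i"
    using permutes_align_sorted_list_of_set[OF fin inj] unfolding m_def cs_def by blast
  have cs: "bij_betw ((!) cs) {0..<m} S"
    unfolding cs_def m_def using fin by (intro bij_betw_nth) auto
  have p_less: "p i < m" if "i < m" for i using permutes_in_image[OF p(1)] that by simp
  have A: "A \<in> carrier_mat m m"
    unfolding A_def m_def using submat_RS_carrier[of Om "\<rho> ` S" S] card_image[OF inj] by simp
  have A_index: "A $$ (i, j) = Om (\<rho> (cs ! p i)) (cs ! j)" if "i < m" "j < m" for i j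
    using p(2)[OF that(1)] that card_image[OF inj] unfolding A_def cs_def m_def
    by (simp add: index_submat_RS)
  have "det A = signof p * (\<Prod>i = 0..<m. A $$ (i, p i))"
  proof (rule det_eq_single_term[OF A p(1)])
    fix q assume q: "q permutes {0..<m}" "q \<noteq> p"
    then obtain i where i: "q i \<noteq> p i" by auto
    then have "i < m" using q p(1) by (metis atLeastLessThan_iff permutes_not_in)
    moreover have "q i < m" using permutes_in_image[OF q(1)] \<open>i < m\<close> by simp
    moreover have "p i < m" using p_less \<open>i < m\<close> .
    ultimately have "cs ! q i \<noteq> cs ! p i" "cs ! q i \<in> S" "cs ! p i \<in> S"
      using i inj_on_eq_iff[OF bij_betw_imp_inj_on[OF cs]] bij_betw_apply[OF cs] by auto
    then show "\<exists>i<m. A $$ (i, q i) = 0"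
      using A_index[OF \<open>i < m\<close> \<open>q i < m\<close>] monomial \<open>i < m\<close> by metis
  qed
  then have "\<bar>det A\<bar> = (\<Prod>i = 0..<m. \<bar>Om (\<rho> (cs ! p i)) (cs ! p i)\<bar>)"
    by (simp add: abs_mult abs_prod sign_def A_index p_less)
  also have "\<dots> = (\<Prod>i = 0..<m. \<bar>Om (\<rho> (cs ! i)) (cs ! i)\<bar>)"
    using prod.permute[OF p(1), of "\<lambda>i. \<bar>Om (\<rho> (cs ! i)) (cs ! i)\<bar>"] by simp
  also have "\<dots> = (\<Prod>s\<in>S. \<bar>Om (\<rho> s) s\<bar>)"
    by (rule prod.reindex_bij_betw[OF cs])
  finally show ?thesis unfolding A_def .
qed

lemma abs_det_submat_RS_monomial_ge:
  fixes Om :: "nat \<Rightarrow> nat \<Rightarrow> real"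
  assumes "finite S" "inj_on \<rho> S" "\<forall>s\<in>S. \<forall>s'\<in>S. Om (\<rho> s) s' \<noteq> 0 \<longleftrightarrow> s = s'"
    and "\<forall>s\<in>S. \<bar>Om (\<rho> s) s\<bar> \<ge> d" "d \<ge> 0"
  shows "\<bar>det (submat_RS Om (\<rho> ` S) S)\<bar> \<ge> d ^ card S"
proof -
  have "d ^ card S \<le> (\<Prod>s\<in>S. \<bar>Om (\<rho> s) s\<bar>)"
    using assms prod_mono[of S "\<lambda>_. d"] by simp
  then show ?thesis using abs_det_submat_RS_monomial[OF assms(1-3)] by simp
qed

lemma monomial_sub_image:
  assumes inj: "inj_on \<rho> S" and monomial: "\<forall>s\<in>S. \<forall>s'\<in>S. Om (\<rho> s) s' \<noteq> 0 \<longleftrightarrow> s = s'"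
  shows "monomial_sub Om (\<rho> ` S) S"
  unfolding monomial_sub_def
proof (intro conjI ballI)
  show "card (\<rho> ` S) = card S" using card_image[OF inj] .
next
  fix r assume "r \<in> \<rho> ` S"
  then obtain s where s: "s \<in> S" "r = \<rho> s" by blast
  show "\<exists>!s. s \<in> S \<and> Om r s \<noteq> 0"
  proof (rule ex1I[of _ s])
    show "s \<in> S \<and> Om r s \<noteq> 0" using s monomial by blast
    show "s' = s" if "s' \<in> S \<and> Om r s' \<noteq> 0" for s'
      using that s monomial by metis
  qed
next
  fix s assume s: "s \<in> S"
  show "\<exists>!r. r \<in> \<rho> ` S \<and> Om r s \<noteq> 0"
  proof (rule ex1I[of _ "\<rho> s"])
    show "\<rho> s \<in> \<rho> ` S \<and> Om (\<rho> s) s \<noteq> 0" using s monomial by blast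
    show "r = \<rho> s" if "r \<in> \<rho> ` S \<and> Om r s \<noteq> 0" for r
      using that s monomial by force
  qed
qed

section \<open>Averaging the measurement over its outcomes\<close>

definition G_pair_op :: "nat \<Rightarrow> (nat \<Rightarrow> nat \<Rightarrow> real) \<Rightarrow> nat set \<Rightarrow> nat \<Rightarrow> complex mat" where
  "G_pair_op n Om X j = mat (2 ^ n) (2 ^ n) (\<lambda>(a, b). \<Sum>S\<in>subsets_card n 2.
     complex_of_real (xS X S * det (submat_RS Om {2 * j - 1, 2 * j} S)) * gammaS n S $$ (a, b))"

lemma G_pair_op_carrier [simp]: "G_pair_op n Om X j \<in> carrier_mat (2 ^ n) (2 ^ n)"
  unfolding G_pair_op_def by simp

lemma dim_G_pair_op [simp]: "dim_row (G_pair_op n Om X j) = 2 ^ n" "dim_col (G_pair_op n Om X j) = 2 ^ n"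
  unfolding G_pair_op_def by simp_all

lemma G_factor_eq: "G_factor n Om q X j =
  complex_of_real (1 / 2 ^ (2 * n + 1)) \<cdot>\<^sub>m (1\<^sub>m (2 ^ n) + of_int (q j) \<cdot>\<^sub>m G_pair_op n Om X j)"
  unfolding G_factor_def G_pair_op_def ..

lemma G_factor_carrier [simp]: "G_factor n Om q X j \<in> carrier_mat (2 ^ n) (2 ^ n)"
  unfolding G_factor_eq by simp

lemma G_op_carrier [simp]: "G_op n Om q X \<in> carrier_mat (2 ^ n) (2 ^ n)"
  unfolding G_op_def by (simp add: foldr_mult_carrier)

lemma mat_sum_G_factor:
  "mat_sum (2 ^ n) (\<lambda>t. G_factor n Om (\<lambda>_. t) X j) {-1, 1} = complex_of_real (1 / 2 ^ (2 * n)) \<cdot>\<^sub>m 1\<^sub>m (2 ^ n)"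
proof -
  have "complex_of_real (1 / 2 ^ (2 * n)) = complex_of_real (1 / 2 ^ (2 * n + 1)) * 2"
    by (simp add: field_simps)
  then show ?thesis
    by (intro eq_matI) (simp_all add: index_mat_sum G_factor_eq algebra_simps)
qed

lemma mat_sum_signed_G_factor:
  "mat_sum (2 ^ n) (\<lambda>t. of_int t \<cdot>\<^sub>m G_factor n Om (\<lambda>_. t) X j) {-1, 1} =
   complex_of_real (1 / 2 ^ (2 * n)) \<cdot>\<^sub>m G_pair_op n Om X j"
proof -
  have "complex_of_real (1 / 2 ^ (2 * n)) = complex_of_real (1 / 2 ^ (2 * n + 1)) * 2"
    by (simp add: field_simps)
  then show ?thesis
    by (intro eq_matI) (simp_all add: index_mat_sum G_factor_eq algebra_simps)
qed

text \<open>The average factorises over the pairs \<open>j\<close>, since \<open>q\<^sub>j\<close> enters only the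
  \<open>j\<close>-th factor of \<open>G(q, X)\<close>.\<close>

lemma mat_sum_parity_G_op:
  assumes J: "J \<subseteq> {1..n}"
  shows "mat_sum (2 ^ n) (\<lambda>q. complex_of_real (\<Prod>j\<in>J. real_of_int (q j)) \<cdot>\<^sub>m G_op n Om q X) (q_set n) =
    complex_of_real (1 / 2 ^ (2 * n)) \<cdot>\<^sub>m
      foldr (*) (map (\<lambda>j. if j \<in> J then G_pair_op n Om X j else 1\<^sub>m (2 ^ n)) [1..<n+1]) (1\<^sub>m (2 ^ n))"
proof -
  define js where "js = [1..<n+1]"
  have js: "set js = {1..n}" "distinct js" unfolding js_def by auto
  define \<kappa> :: complex where "\<kappa> = complex_of_real ((2 ^ (2 * n)) ^ (n - 1))"
  define c :: complex where "c = complex_of_real (1 / 2 ^ (2 * n))"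
  define w :: "nat \<Rightarrow> int \<Rightarrow> complex" where "w j t = (if j \<in> J then of_int t else 1)" for j t
  define F where "F j t = w j t \<cdot>\<^sub>m G_factor n Om (\<lambda>_. t) X j" for j t
  have F_carrier: "F j t \<in> carrier_mat (2 ^ n) (2 ^ n)" for j t
    unfolding F_def by simp
  have "complex_of_real (\<Prod>j\<in>J. real_of_int (q j)) = (\<Prod>j\<in>set js. w j (q j))" for q
    unfolding w_def using J js by (simp add: prod.If_cases Int_absorb1)
  moreover have "G_op n Om q X = \<kappa> \<cdot>\<^sub>m foldr (*) (map (\<lambda>j. G_factor n Om (\<lambda>_. q j) X j) js) (1\<^sub>m (2 ^ n))" for q
    unfolding G_op_def \<kappa>_def js_def G_factor_def by simp
  ultimately have weighted: "complex_of_real (\<Prod>j\<in>J. real_of_int (q j)) \<cdot>\<^sub>m G_op n Om q X =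
      \<kappa> \<cdot>\<^sub>m foldr (*) (map (\<lambda>j. F j (q j)) js) (1\<^sub>m (2 ^ n))" for q
    unfolding F_def using foldr_mult_smult[OF js(2), of "\<lambda>j. G_factor n Om (\<lambda>_. q j) X j" "2 ^ n"]
    by (simp add: smult_smult_mat mult.commute foldr_mult_carrier)
  have factor: "mat_sum (2 ^ n) (F j) {-1, 1} = c \<cdot>\<^sub>m (if j \<in> J then G_pair_op n Om X j else 1\<^sub>m (2 ^ n))" for j
    unfolding F_def w_def c_def by (simp add: mat_sum_G_factor mat_sum_signed_G_factor)
  have "\<kappa> * c ^ n = complex_of_real (1 / 2 ^ (2 * n))"
  proof -
    have "((2::real) ^ (2 * n)) ^ (n - 1) * (1 / 2 ^ (2 * n)) ^ n = 1 / 2 ^ (2 * n)"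
      by (cases n) (simp_all add: power_one_over field_simps)
    then show ?thesis unfolding \<kappa>_def c_def by (metis of_real_mult of_real_power)
  qed
  moreover have "mat_sum (2 ^ n) (\<lambda>q. complex_of_real (\<Prod>j\<in>J. real_of_int (q j)) \<cdot>\<^sub>m G_op n Om q X) (q_set n)
      = \<kappa> \<cdot>\<^sub>m foldr (*) (map (\<lambda>j. mat_sum (2 ^ n) (F j) {-1, 1}) js) (1\<^sub>m (2 ^ n))"
    unfolding weighted q_set_def js(1)[symmetric]
    by (simp add: mat_sum_smult foldr_mult_carrier F_carrier foldr_mult_mat_sum[OF js(2)])
  ultimately show ?thesis
    unfolding factor js_def[symmetric]
    by (simp add: foldr_mult_smult[OF js(2)] js(1) smult_smult_mat)
qed

lemma xS_even:
  assumes "finite X" "finite T" "even (card T)"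
  shows "xS X T = (-1) ^ card (T \<inter> X)"
proof -
  have "card (T \<inter> X) \<le> card X * card T"
    using assms card_mono[of T "T \<inter> X"] card_mono[of X "T \<inter> X"]
    by (cases "card X") auto
  then have "(-1 :: real) ^ (card X * card T - card (T \<inter> X)) * (-1) ^ card (T \<inter> X) = 1"
    using assms(3) by (simp flip: power_add)
  then show ?thesis unfolding xS_def
    by (metis mult.right_neutral mult_minus1_right power_minus1_even power_minus_mult minus_one_mult_self
        mult.left_neutral mult.assoc)
qed

lemma xS_abs [simp]: "\<bar>xS X T\<bar> = 1"
  unfolding xS_def by simp

lemma xS_empty [simp]: "xS X {} = 1"
  unfolding xS_def by simp

lemma card_filter_eq_sum: "finite A \<Longrightarrow> card {j\<in>A. P j} = (\<Sum>j\<in>A. if P j then 1 else 0)"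
  using sum.inter_restrict[of A "\<lambda>_. 1 :: nat" "{j. P j}"] by (simp add: Int_def)

lemma sum_card_filter_mem:
  assumes "finite A" "finite X"
  shows "(\<Sum>x\<in>X. card {j\<in>A. x \<in> f j}) = (\<Sum>j\<in>A. card (f j \<inter> X))"
proof -
  have "(\<Sum>x\<in>X. card {j\<in>A. x \<in> f j}) = (\<Sum>x\<in>X. \<Sum>j\<in>A. if x \<in> f j then 1 else 0)"
    using assms by (simp add: card_filter_eq_sum)
  also have "\<dots> = (\<Sum>j\<in>A. \<Sum>x\<in>X. if x \<in> f j then 1 else 0)" by (rule sum.swap)
  also have "\<dots> = (\<Sum>j\<in>A. card (f j \<inter> X))"
    using assms by (simp add: card_filter_eq_sum Int_def conj_commute)
  finally show ?thesis .
qed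

text \<open>Expanding \<open>\<Prod>\<^sub>x (1 + (-1)^{c x})\<close> over the subsets \<open>X\<close> of \<open>U\<close> shows that the sum
  of \<open>x\<^sub>S(X) \<Prod>\<^sub>j x\<^bsub>T\<^sub>j\<^esub>(X)\<close> vanishes unless every point of \<open>U\<close> is covered
  an even number of times by \<open>S\<close> and the \<open>T\<^sub>j\<close>.\<close>

lemma sum_Pow_xS_prod:
  fixes T :: "'j \<Rightarrow> nat set"
  assumes U: "finite U" and A: "finite A" and "\<forall>j\<in>A. T j \<subseteq> U" "S \<subseteq> U"
    and "\<forall>j\<in>A. even (card (T j))" "even (card S)"
  shows "(\<Sum>X\<in>Pow U. xS X S * (\<Prod>j\<in>A. xS X (T j))) =
     (\<Prod>x\<in>U. (-1) ^ ((if x \<in> S then 1 else 0) + card {j\<in>A. x \<in> T j}) + 1)"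
proof -
  define cnt where "cnt x = (if x \<in> S then 1 else 0) + card {j\<in>A. x \<in> T j}" for x
  have "xS X S * (\<Prod>j\<in>A. xS X (T j)) = (\<Prod>x\<in>X. (-1) ^ cnt x)" if "X \<subseteq> U" for X
  proof -
    have fin: "finite X" "finite S" "\<And>j. j \<in> A \<Longrightarrow> finite (T j)"
      using that assms finite_subset by blast+
    have "card (S \<inter> X) = (\<Sum>x\<in>X. if x \<in> S then 1 else 0)"
      using fin by (simp add: card_filter_eq_sum[symmetric] Int_def conj_commute)
    then have count: "card (S \<inter> X) + (\<Sum>j\<in>A. card (T j \<inter> X)) = (\<Sum>x\<in>X. cnt x)"
      unfolding cnt_def sum.distrib sum_card_filter_mem[OF A fin(1)] by simp
    have "xS X S * (\<Prod>j\<in>A. xS X (T j)) = (-1) ^ card (S \<inter> X) * (\<Prod>j\<in>A. (-1) ^ card (T j \<inter> X))"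
      using xS_even[OF fin(1,2)] xS_even[OF fin(1,3)] assms by simp
    also have "\<dots> = (-1) ^ (card (S \<inter> X) + (\<Sum>j\<in>A. card (T j \<inter> X)))"
      by (simp add: power_add power_sum)
    finally show ?thesis unfolding count by (simp add: power_sum)
  qed
  then have "(\<Sum>X\<in>Pow U. xS X S * (\<Prod>j\<in>A. xS X (T j))) = (\<Sum>X\<in>Pow U. (\<Prod>x\<in>X. (-1) ^ cnt x) * (\<Prod>x\<in>U - X. 1))"
    by (intro sum.cong) auto
  also have "\<dots> = (\<Prod>x\<in>U. (-1) ^ cnt x + 1)" by (rule prod_add[symmetric, OF U])
  finally show ?thesis unfolding cnt_def .
qed

text \<open>The classical post-processing: output \<open>\<sigma> x\<^sub>S(X) \<Prod>\<^sub>j\<^sub>\<in>\<^sub>J q\<^sub>j\<close>, a sign when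
  \<open>\<bar>\<sigma>\<bar> = 1\<close>, and otherwise its randomised version with that expectation.\<close>

definition parity_post :: "nat set \<Rightarrow> nat set \<Rightarrow> real \<Rightarrow> (nat \<Rightarrow> int) \<Rightarrow> nat set \<Rightarrow> int \<Rightarrow> real" where
  "parity_post J S \<sigma> q X e = (1 + e * \<sigma> * xS X S * (\<Prod>j\<in>J. q j)) / 2"

lemma parity_post_stochastic:
  assumes "\<bar>\<sigma>\<bar> \<le> 1" "q \<in> q_set n" "J \<subseteq> {1..n}"
  shows "\<forall>e\<in>{-1, 1}. parity_post J S \<sigma> q X e \<ge> 0" "(\<Sum>e\<in>{-1, 1}. parity_post J S \<sigma> q X e) = 1"
proof -
  have "\<bar>real_of_int (q j)\<bar> = 1" if "j \<in> J" for j
    using assms that unfolding q_set_def by (force simp: PiE_iff)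
  then have "\<bar>\<Prod>j\<in>J. real_of_int (q j)\<bar> = 1" by (simp add: abs_prod)
  then have "\<bar>e * \<sigma> * xS X S * (\<Prod>j\<in>J. q j)\<bar> \<le> 1" if "e \<in> {-1, 1}" for e :: int
    using that assms(1) by (auto simp: abs_mult)
  then have "-1 \<le> e * \<sigma> * xS X S * (\<Prod>j\<in>J. q j)" if "e \<in> {-1, 1}" for e :: int
    using that by (simp add: abs_le_iff)
  then show "\<forall>e\<in>{-1, 1}. parity_post J S \<sigma> q X e \<ge> 0"
    unfolding parity_post_def by fastforce
  show "(\<Sum>e\<in>{-1, 1}. parity_post J S \<sigma> q X e) = 1"
    unfolding parity_post_def by (simp add: field_simps)
qed

section \<open>Joint measurement from a monomial pairing of rows and columns\<close>

lemma sorted_list_of_set_Majorana_pair: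
  "j \<ge> 1 \<Longrightarrow> sorted_list_of_set {2 * j - 1, 2 * (j :: nat)} = [2 * j - 1, 2 * j]"
  by (simp add: sorted_list_of_set.idem_if_sorted_distinct[of "[2 * j - 1, 2 * j]", simplified])

lemma distinct_concat_sorted_list_of_set:
  assumes "distinct js" "\<forall>j\<in>set js. finite (F j)"
    "\<forall>j\<in>set js. \<forall>j'\<in>set js. j \<noteq> j' \<longrightarrow> F j \<inter> F j' = {}"
  shows "distinct (concat (map (\<lambda>j. sorted_list_of_set (F j)) js))"
  using assms by (induction js) auto

lemma finite_idx2: "finite (idx2 n)" and card_idx2: "card (idx2 n) = 2 * n"
  unfolding idx2_def by auto

locale monomial_pairing =
  fixes n k :: nat and Om :: "nat \<Rightarrow> nat \<Rightarrow> real" and J S :: "nat set" and \<rho> :: "nat \<Rightarrow> nat"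
  assumes J_subset: "J \<subseteq> {1..n}" and card_J: "card J = k"
    and S_mem: "S \<in> subsets_card n (2 * k)"
    and inj_\<rho>: "inj_on \<rho> S"
    and image_\<rho>: "\<rho> ` S = (\<Union>j\<in>J. {2 * j - 1, 2 * j})"
    and monomial: "\<forall>s\<in>S. \<forall>s'\<in>S. Om (\<rho> s) s' \<noteq> 0 \<longleftrightarrow> s = s'"
begin

lemma S_subset: "S \<subseteq> idx2 n" and finite_S: "finite S" and card_S: "card S = 2 * k"
  using S_mem unfolding subsets_card_def idx2_def by (auto intro: finite_subset)

definition pair_cols :: "nat \<Rightarrow> nat set" where
  "pair_cols j = {s\<in>S. \<rho> s \<in> {2 * j - 1, 2 * j}}"

lemma pair_cols_subset: "pair_cols j \<subseteq> S"
  unfolding pair_cols_def by auto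

lemma pair_cols_eq:
  assumes j: "j \<in> J"
  obtains a b where "a \<in> S" "b \<in> S" "\<rho> a = 2 * j - 1" "\<rho> b = 2 * j" "a \<noteq> b" "pair_cols j = {a, b}"
proof -
  have "j \<ge> 1" using j J_subset by auto
  have "2 * j - 1 \<in> \<rho> ` S" "2 * j \<in> \<rho> ` S"
    unfolding image_\<rho> using j by blast+
  then obtain a b where ab: "a \<in> S" "\<rho> a = 2 * j - 1" "b \<in> S" "\<rho> b = 2 * j"
    by (metis imageE)
  moreover have "a \<noteq> b" using ab \<open>j \<ge> 1\<close> by auto
  moreover have "pair_cols j = {a, b}"
    using ab inj_onD[OF inj_\<rho>] unfolding pair_cols_def by auto
  ultimately show ?thesis using that by blast
qed

lemma card_pair_cols:
  assumes "j \<in> J"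
  shows "card (pair_cols j) = 2"
proof -
  obtain a b where ab: "a \<in> S" "b \<in> S" "\<rho> a = 2 * j - 1" "\<rho> b = 2 * j" "a \<noteq> b" "pair_cols j = {a, b}"
    by (rule pair_cols_eq[OF assms])
  then show ?thesis by simp
qed

lemma image_pair_cols:
  assumes "j \<in> J"
  shows "\<rho> ` pair_cols j = {2 * j - 1, 2 * j}"
proof -
  obtain a b where ab: "a \<in> S" "b \<in> S" "\<rho> a = 2 * j - 1" "\<rho> b = 2 * j" "a \<noteq> b" "pair_cols j = {a, b}"
    by (rule pair_cols_eq[OF assms])
  then show ?thesis by simp
qed

lemma pair_cols_disjoint: "j \<in> J \<Longrightarrow> j' \<in> J \<Longrightarrow> j \<noteq> j' \<Longrightarrow> pair_cols j \<inter> pair_cols j' = {}"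
  using J_subset unfolding pair_cols_def by fastforce

lemma UN_pair_cols: "(\<Union>j\<in>J. pair_cols j) = S"
  using image_\<rho> unfolding pair_cols_def by blast

text \<open>Expanding each factor of \<open>G\<close> in the pair \<open>j\<close> as a sum over \<open>T \<in> \<S>\<^sub>2\<close> chooses one
  \<open>T\<close> per \<open>j \<in> J\<close> (and nothing for \<open>j \<notin> J\<close>); the diagonal choice is \<open>T = pair_cols j\<close>.\<close>

definition choices :: "nat \<Rightarrow> nat set set" where
  "choices j = (if j \<in> J then subsets_card n 2 else {{}})"

definition diag_choice :: "nat \<Rightarrow> nat set" where
  "diag_choice = restrict (\<lambda>j. if j \<in> J then pair_cols j else {}) {1..n}"

definition pair_det :: "nat \<Rightarrow> nat set \<Rightarrow> real" where
  "pair_det j T = (if j \<in> J then det (submat_RS Om {2 * j - 1, 2 * j} T) else 1)"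

lemma finite_choices: "finite (choices j)"
proof -
  have "subsets_card n 2 \<subseteq> Pow (idx2 n)" unfolding subsets_card_def by auto
  then show ?thesis unfolding choices_def using finite_idx2 by (auto intro: finite_subset)
qed

lemma choices_subset: "T \<in> choices j \<Longrightarrow> T \<subseteq> idx2 n \<and> finite T \<and> even (card T)"
  unfolding choices_def subsets_card_def idx2_def by (auto split: if_splits intro: finite_subset)

lemma diag_choice_PiE: "diag_choice \<in> PiE {1..n} choices"
proof -
  have "pair_cols j \<in> subsets_card n 2" if "j \<in> J" for j
    using pair_cols_subset S_subset card_pair_cols[OF that] unfolding subsets_card_def by blast
  then show ?thesis unfolding diag_choice_def choices_def by auto
qed

lemma pair_det_nonzero_imp_eq:
  assumes j: "j \<in> J" and T: "T \<in> subsets_card n 2" "T \<subseteq> S"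
    and nonzero: "det (submat_RS Om {2 * j - 1, 2 * j} T) \<noteq> 0"
  shows "T = pair_cols j"
proof -
  obtain a b where ab: "a \<in> S" "b \<in> S" "\<rho> a = 2 * j - 1" "\<rho> b = 2 * j" "a \<noteq> b" "pair_cols j = {a, b}"
    by (rule pair_cols_eq[OF j])
  have "j \<ge> 1" using j J_subset by auto
  have card_T: "card T = 2" and fin_T: "finite T"
    using T unfolding subsets_card_def idx2_def by (auto intro: finite_subset)
  define A where "A = submat_RS Om {2 * j - 1, 2 * j} T"
  have A: "A \<in> carrier_mat 2 2"
    unfolding A_def using submat_RS_carrier[of Om "{2 * j - 1, 2 * j}" T] card_T \<open>j \<ge> 1\<close>
    by (simp add: numeral_2_eq_2)
  have A_index: "A $$ (r, i) = Om ([2 * j - 1, 2 * j] ! r) (sorted_list_of_set T ! i)" if "r < 2" "i < 2" for r i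
    unfolding A_def using index_submat_RS[of r "{2 * j - 1, 2 * j}" i T Om] that card_T \<open>j \<ge> 1\<close>
    by (simp add: sorted_list_of_set_Majorana_pair)
  have col_in_S: "sorted_list_of_set T ! i \<in> T" if "i < 2" for i
    using that card_T fin_T by (metis length_sorted_list_of_set nth_mem set_sorted_list_of_set)
  have "x \<in> T" if x: "(r = 0 \<and> x = a) \<or> (r = 1 \<and> x = b)" for r :: nat and x
  proof (rule ccontr)
    assume "x \<notin> T"
    have r: "r < 2" "[2 * j - 1, 2 * j] ! r = \<rho> x" "x \<in> S" using x ab by auto
    have "A $$ (r, i) = 0" if "i < 2" for i
    proof -
      have "sorted_list_of_set T ! i \<in> S" "sorted_list_of_set T ! i \<noteq> x"
        using col_in_S[OF that] \<open>x \<notin> T\<close> T(2) by auto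
      then show ?thesis using A_index[OF r(1) that] r(2,3) monomial by metis
    qed
    then have "det A = 0" using r(1) by (intro det_zero_row[OF A, of r])
    then show False using nonzero unfolding A_def by simp
  qed
  then have "{a, b} \<subseteq> T" by blast
  then have "{a, b} = T" using ab card_T by (intro card_subset_eq[OF fin_T]) auto
  then show ?thesis using ab by simp
qed

definition char_sum :: "(nat \<Rightarrow> nat set) \<Rightarrow> real" where
  "char_sum f = (\<Sum>X\<in>Pow (idx2 n). xS X S * (\<Prod>j\<in>{1..n}. xS X (f j)))"

definition even_cover :: "(nat \<Rightarrow> nat set) \<Rightarrow> bool" where
  "even_cover f \<longleftrightarrow> (\<forall>x\<in>idx2 n. even ((if x \<in> S then 1 else 0) + card {j\<in>{1..n}. x \<in> f j}))"

lemma char_sum_eq: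
  assumes f: "f \<in> PiE {1..n} choices"
  shows "char_sum f = (if even_cover f then 2 ^ (2 * n) else 0)"
proof -
  have "\<forall>j\<in>{1..n}. f j \<in> choices j" using f by (auto simp: PiE_iff)
  then have "\<forall>j\<in>{1..n}. f j \<subseteq> idx2 n" "\<forall>j\<in>{1..n}. even (card (f j))"
    using choices_subset by blast+
  then have "char_sum f = (\<Prod>x\<in>idx2 n. (-1) ^ ((if x \<in> S then 1 else 0) + card {j\<in>{1..n}. x \<in> f j}) + 1)"
    unfolding char_sum_def using S_subset card_S by (intro sum_Pow_xS_prod finite_idx2) auto
  also have "\<dots> = (if even_cover f then 2 ^ (2 * n) else 0)"
  proof (cases "even_cover f")
    case True
    then show ?thesis unfolding even_cover_def using card_idx2 by simp
  next
    case False
    then obtain x where "x \<in> idx2 n" "odd ((if x \<in> S then 1 else 0) + card {j\<in>{1..n}. x \<in> f j})"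
      unfolding even_cover_def by auto
    then have "(\<Prod>x\<in>idx2 n. (-1 :: real) ^ ((if x \<in> S then 1 else 0) + card {j\<in>{1..n}. x \<in> f j}) + 1) = 0"
      using finite_idx2 by (intro prod_zero[OF _ bexI[of _ x]]) auto
    then show ?thesis using False by simp
  qed
  finally show ?thesis .
qed

text \<open>A counting argument: the \<open>f j\<close> with \<open>j \<in> J\<close> have \<open>2k\<close> points in total, and an even
  cover must spend at least one of them on each of the \<open>2k\<close> points of \<open>S\<close>.\<close>

lemma even_cover_subset:
  assumes f: "f \<in> PiE {1..n} choices" and even: "even_cover f"
  shows "\<forall>j\<in>J. f j \<subseteq> S"
proof -
  define cnt where "cnt x = card {j\<in>{1..n}. x \<in> f j}" for x
  have f_subset: "f j \<subseteq> idx2 n" if "j \<in> {1..n}" for j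
  proof -
    have "f j \<in> choices j" using f that by (auto simp: PiE_iff)
    then show ?thesis using choices_subset by blast
  qed
  have "(\<Sum>x\<in>idx2 n. cnt x) = (\<Sum>j\<in>{1..n}. card (f j \<inter> idx2 n))"
    unfolding cnt_def by (rule sum_card_filter_mem) (auto simp: finite_idx2)
  also have "\<dots> = (\<Sum>j\<in>{1..n}. if j \<in> J then 2 else 0)"
  proof (rule sum.cong[OF refl])
    fix j assume j: "j \<in> {1..n}"
    then have "f j \<in> choices j" using f by (auto simp: PiE_iff)
    then show "card (f j \<inter> idx2 n) = (if j \<in> J then 2 else 0)"
      using f_subset[OF j] unfolding choices_def subsets_card_def by (auto simp: Int_absorb2 split: if_splits)
  qed
  also have "\<dots> = 2 * k"
    using J_subset card_J by (simp add: sum.If_cases Int_absorb1)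
  finally have total: "(\<Sum>x\<in>idx2 n. cnt x) = 2 * k" .
  have "cnt x \<ge> 1" if "x \<in> S" for x
  proof -
    have "even (1 + cnt x)" using even that S_subset unfolding even_cover_def cnt_def by force
    then show ?thesis by (cases "cnt x") auto
  qed
  then have "(\<Sum>x\<in>S. cnt x) \<ge> 2 * k"
    using sum_mono[of S "\<lambda>_. 1" cnt] card_S by simp
  moreover have "(\<Sum>x\<in>idx2 n. cnt x) = (\<Sum>x\<in>S. cnt x) + (\<Sum>x\<in>idx2 n - S. cnt x)"
    using sum.subset_diff[OF S_subset finite_idx2] by (simp add: add.commute)
  ultimately have zero: "\<forall>x\<in>idx2 n - S. cnt x = 0" using total finite_idx2 by simp
  show ?thesis
  proof (intro ballI subsetI)
    fix j x assume "j \<in> J" "x \<in> f j"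
    moreover have "j \<in> {1..n}" using \<open>j \<in> J\<close> J_subset by blast
    ultimately have "j \<in> {j\<in>{1..n}. x \<in> f j}" "x \<in> idx2 n" using f_subset by blast+
    then have "cnt x \<noteq> 0" unfolding cnt_def by (auto simp: card_eq_0_iff)
    then show "x \<in> S" using zero \<open>x \<in> idx2 n\<close> by (metis DiffI)
  qed
qed

lemma even_cover_diag_choice: "even_cover diag_choice"
  unfolding even_cover_def
proof
  fix x assume "x \<in> idx2 n"
  have eq: "{j\<in>{1..n}. x \<in> diag_choice j} = {j\<in>J. x \<in> pair_cols j}"
    unfolding diag_choice_def using J_subset by auto
  show "even ((if x \<in> S then 1 else 0) + card {j\<in>{1..n}. x \<in> diag_choice j})"
  proof (cases "x \<in> S")
    case True
    then obtain j where j: "j \<in> J" "x \<in> pair_cols j" using UN_pair_cols by blast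
    then have "{j\<in>J. x \<in> pair_cols j} = {j}" using pair_cols_disjoint by blast
    then show ?thesis unfolding eq using True by simp
  next
    case False
    then have "{j\<in>J. x \<in> pair_cols j} = {}" using pair_cols_subset by blast
    then show ?thesis unfolding eq using False by (simp only: card.empty) simp
  qed
qed

lemma eq_diag_choice:
  assumes f: "f \<in> PiE {1..n} choices" and sub: "\<forall>j\<in>J. f j \<subseteq> S"
    and nonzero: "(\<Prod>j\<in>{1..n}. pair_det j (f j)) \<noteq> 0"
  shows "f = diag_choice"
proof
  fix j
  show "f j = diag_choice j"
  proof (cases "j \<in> {1..n}")
    case False
    then show ?thesis using f diag_choice_PiE by (metis PiE_arb)
  next
    case j: True
    then have fj: "f j \<in> choices j" using f by (auto simp: PiE_iff)
    show ?thesis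
    proof (cases "j \<in> J")
      case True
      have "pair_det j (f j) \<noteq> 0" using nonzero j by auto
      then have "det (submat_RS Om {2 * j - 1, 2 * j} (f j)) \<noteq> 0"
        unfolding pair_det_def using True by simp
      then show ?thesis
        using pair_det_nonzero_imp_eq[OF True] fj sub True j
        unfolding choices_def diag_choice_def by auto
    next
      case False
      then show ?thesis using fj j unfolding choices_def diag_choice_def by simp
    qed
  qed
qed

lemma char_sum_pair_det_eq_0:
  "f \<in> PiE {1..n} choices \<Longrightarrow> f \<noteq> diag_choice \<Longrightarrow> char_sum f * (\<Prod>j\<in>{1..n}. pair_det j (f j)) = 0"
  using char_sum_eq even_cover_subset eq_diag_choice by fastforce

lemma char_sum_diag_choice: "char_sum diag_choice = 2 ^ (2 * n)"
  using char_sum_eq[OF diag_choice_PiE] even_cover_diag_choice by simp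

definition pair_op :: "nat set \<Rightarrow> nat \<Rightarrow> complex mat" where
  "pair_op X j = (if j \<in> J then G_pair_op n Om X j else 1\<^sub>m (2 ^ n))"

definition choice_gamma :: "(nat \<Rightarrow> nat set) \<Rightarrow> complex mat" where
  "choice_gamma f = foldr (*) (map (\<lambda>j. gammaS n (f j)) [1..<n+1]) (1\<^sub>m (2 ^ n))"

lemma pair_op_carrier [simp]: "pair_op X j \<in> carrier_mat (2 ^ n) (2 ^ n)"
  unfolding pair_op_def by simp

lemma choice_gamma_carrier [simp]: "choice_gamma f \<in> carrier_mat (2 ^ n) (2 ^ n)"
  unfolding choice_gamma_def by (rule foldr_mult_carrier) simp

lemma pair_op_eq_mat_sum:
  "pair_op X j = mat_sum (2 ^ n) (\<lambda>T. complex_of_real (xS X T * pair_det j T) \<cdot>\<^sub>m gammaS n T) (choices j)"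
proof (cases "j \<in> J")
  case True
  show ?thesis
    unfolding pair_op_def choices_def pair_det_def G_pair_op_def mat_sum_def using True
    by (intro eq_matI) auto
next
  case False
  then show ?thesis unfolding pair_op_def choices_def pair_det_def by (simp add: mat_sum_singleton)
qed

lemma foldr_pair_op:
  "foldr (*) (map (pair_op X) [1..<n+1]) (1\<^sub>m (2 ^ n)) =
   mat_sum (2 ^ n) (\<lambda>f. complex_of_real (\<Prod>j\<in>{1..n}. xS X (f j) * pair_det j (f j)) \<cdot>\<^sub>m choice_gamma f)
     (PiE {1..n} choices)"
proof -
  have js: "set [1..<n+1] = {1..n}" "distinct [1..<n+1]" by auto
  have "foldr (*) (map (pair_op X) [1..<n+1]) (1\<^sub>m (2 ^ n)) =
      foldr (*) (map (\<lambda>j. mat_sum (2 ^ n) (\<lambda>T. complex_of_real (xS X T * pair_det j T) \<cdot>\<^sub>m gammaS n T)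
        (choices j)) [1..<n+1]) (1\<^sub>m (2 ^ n))"
    by (simp add: pair_op_eq_mat_sum[abs_def])
  also have "\<dots> = mat_sum (2 ^ n) (\<lambda>f. foldr (*) (map (\<lambda>j. complex_of_real (xS X (f j) * pair_det j (f j))
      \<cdot>\<^sub>m gammaS n (f j)) [1..<n+1]) (1\<^sub>m (2 ^ n))) (PiE {1..n} choices)"
    unfolding js(1)[symmetric] by (rule foldr_mult_mat_sum[OF js(2)]) simp
  also have "\<dots> = mat_sum (2 ^ n) (\<lambda>f. complex_of_real (\<Prod>j\<in>{1..n}. xS X (f j) * pair_det j (f j))
      \<cdot>\<^sub>m choice_gamma f) (PiE {1..n} choices)"
  proof (rule mat_sum_cong)
    fix f
    have "foldr (*) (map (\<lambda>j. complex_of_real (xS X (f j) * pair_det j (f j)) \<cdot>\<^sub>m gammaS n (f j)) [1..<n+1])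
        (1\<^sub>m (2 ^ n)) = (\<Prod>j\<in>set [1..<n+1]. complex_of_real (xS X (f j) * pair_det j (f j))) \<cdot>\<^sub>m choice_gamma f"
      unfolding choice_gamma_def by (rule foldr_mult_smult[OF js(2)]) simp
    then show "foldr (*) (map (\<lambda>j. complex_of_real (xS X (f j) * pair_det j (f j)) \<cdot>\<^sub>m gammaS n (f j)) [1..<n+1])
        (1\<^sub>m (2 ^ n)) = complex_of_real (\<Prod>j\<in>{1..n}. xS X (f j) * pair_det j (f j)) \<cdot>\<^sub>m choice_gamma f"
      unfolding js(1) by simp
  qed
  finally show ?thesis .
qed

lemma mat_sum_xS_foldr_pair_op:
  "mat_sum (2 ^ n) (\<lambda>X. complex_of_real (xS X S) \<cdot>\<^sub>m foldr (*) (map (pair_op X) [1..<n+1]) (1\<^sub>m (2 ^ n)))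
     (Pow (idx2 n))
   = complex_of_real (2 ^ (2 * n) * (\<Prod>j\<in>{1..n}. pair_det j (diag_choice j))) \<cdot>\<^sub>m choice_gamma diag_choice"
proof -
  define w where "w X f = (\<Prod>j\<in>{1..n}. xS X (f j) * pair_det j (f j))" for X f
  have "mat_sum (2 ^ n) (\<lambda>X. complex_of_real (xS X S) \<cdot>\<^sub>m foldr (*) (map (pair_op X) [1..<n+1]) (1\<^sub>m (2 ^ n)))
      (Pow (idx2 n))
    = mat_sum (2 ^ n) (\<lambda>X. mat_sum (2 ^ n) (\<lambda>f. complex_of_real (xS X S * w X f) \<cdot>\<^sub>m choice_gamma f)
      (PiE {1..n} choices)) (Pow (idx2 n))"
    unfolding foldr_pair_op w_def
    by (intro mat_sum_cong) (simp add: mat_sum_smult[symmetric] smult_smult_mat)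
  also have "\<dots> = mat_sum (2 ^ n) (\<lambda>f. mat_sum (2 ^ n) (\<lambda>X. complex_of_real (xS X S * w X f) \<cdot>\<^sub>m choice_gamma f)
      (Pow (idx2 n))) (PiE {1..n} choices)"
    by (rule mat_sum_swap)
  also have "\<dots> = mat_sum (2 ^ n) (\<lambda>f. complex_of_real (char_sum f * (\<Prod>j\<in>{1..n}. pair_det j (f j)))
      \<cdot>\<^sub>m choice_gamma f) (PiE {1..n} choices)"
  proof (rule mat_sum_cong)
    fix f
    have "(\<Sum>X\<in>Pow (idx2 n). xS X S * w X f) = char_sum f * (\<Prod>j\<in>{1..n}. pair_det j (f j))"
      unfolding char_sum_def w_def by (simp add: prod.distrib sum_distrib_right mult.assoc)
    then have "(\<Sum>X\<in>Pow (idx2 n). complex_of_real (xS X S * w X f))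
        = complex_of_real (char_sum f * (\<Prod>j\<in>{1..n}. pair_det j (f j)))"
      by (simp only: of_real_sum[symmetric])
    then show "mat_sum (2 ^ n) (\<lambda>X. complex_of_real (xS X S * w X f) \<cdot>\<^sub>m choice_gamma f) (Pow (idx2 n)) =
        complex_of_real (char_sum f * (\<Prod>j\<in>{1..n}. pair_det j (f j))) \<cdot>\<^sub>m choice_gamma f"
      by (simp only: mat_sum_smult_const[OF choice_gamma_carrier])
  qed
  also have "\<dots> = complex_of_real (char_sum diag_choice * (\<Prod>j\<in>{1..n}. pair_det j (diag_choice j)))
      \<cdot>\<^sub>m choice_gamma diag_choice"
    using char_sum_pair_det_eq_0 finite_choices
    by (intro mat_sum_single_nonzero[OF _ diag_choice_PiE]) (auto intro: finite_PiE)
  finally show ?thesis unfolding char_sum_diag_choice .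
qed

lemma choice_gamma_diag_choice: "\<exists>s\<in>{1, -1 :: complex}. choice_gamma diag_choice = s \<cdot>\<^sub>m gammaS n S"
proof -
  define js where "js = [1..<n+1]"
  have js: "set js = {1..n}" "distinct js" unfolding js_def by auto
  have diag: "diag_choice j \<in> choices j" if "j \<in> {1..n}" for j
    using diag_choice_PiE that by (auto simp: PiE_iff)
  have fin: "\<forall>T\<in>set (map diag_choice js). finite T \<and> T \<subseteq> {1..2 * n}"
    using diag choices_subset js unfolding idx2_def by fastforce
  have "diag_choice j \<inter> diag_choice j' = {}" if "j \<in> {1..n}" "j' \<in> {1..n}" "j \<noteq> j'" for j j'
    using that pair_cols_disjoint unfolding diag_choice_def by auto
  then have "distinct (concat (map (\<lambda>j. sorted_list_of_set (diag_choice j)) js))"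
    using fin js by (intro distinct_concat_sorted_list_of_set) auto
  then have dist: "distinct (concat (map sorted_list_of_set (map diag_choice js)))"
    by (simp add: comp_def)
  have "(\<Sum>T\<leftarrow>map diag_choice js. card T choose 2) = (\<Sum>j\<in>{1..n}. card (diag_choice j) choose 2)"
    using js by (simp add: sum_list_distinct_conv_sum_set comp_def)
  also have "\<dots> = (\<Sum>j\<in>{1..n}. if j \<in> J then 1 else 0)"
    by (rule sum.cong) (auto simp: diag_choice_def card_pair_cols numeral_2_eq_2)
  also have "\<dots> = k"
    using J_subset card_J by (simp add: sum.If_cases Int_absorb1)
  finally have pairs: "(\<Sum>T\<leftarrow>map diag_choice js. card T choose 2) = k" .
  have "(\<Union>j\<in>{1..n}. diag_choice j) = (\<Union>j\<in>J. pair_cols j)"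
    unfolding diag_choice_def using J_subset by auto
  then have union: "\<Union>(set (map diag_choice js)) = S"
    using js(1) by (simp add: UN_pair_cols)
  show ?thesis
    using foldr_gammaS_disjoint[OF fin dist pairs] union card_S
    unfolding choice_gamma_def js_def by (simp add: comp_def)
qed

lemma abs_prod_pair_det_diag_choice:
  "\<bar>\<Prod>j\<in>{1..n}. pair_det j (diag_choice j)\<bar> = \<bar>det (submat_RS Om (\<rho> ` S) S)\<bar>"
proof -
  have fin: "finite J" "\<forall>j\<in>J. finite (pair_cols j)"
    using J_subset finite_S pair_cols_subset finite_subset by blast+
  have "\<bar>\<Prod>j\<in>{1..n}. pair_det j (diag_choice j)\<bar> = (\<Prod>j\<in>J. \<bar>det (submat_RS Om (\<rho> ` pair_cols j) (pair_cols j))\<bar>)"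
    using J_subset
    by (simp add: pair_det_def diag_choice_def abs_prod image_pair_cols prod.If_cases Int_absorb1)
  also have "\<dots> = (\<Prod>j\<in>J. \<Prod>s\<in>pair_cols j. \<bar>Om (\<rho> s) s\<bar>)"
    using fin pair_cols_subset monomial inj_on_subset[OF inj_\<rho> pair_cols_subset]
    by (intro prod.cong refl abs_det_submat_RS_monomial) blast+
  also have "\<dots> = (\<Prod>s\<in>S. \<bar>Om (\<rho> s) s\<bar>)"
    using fin pair_cols_disjoint by (simp add: prod.UNION_disjoint[symmetric] UN_pair_cols)
  also have "\<dots> = \<bar>det (submat_RS Om (\<rho> ` S) S)\<bar>"
    by (rule abs_det_submat_RS_monomial[symmetric, OF finite_S inj_\<rho> monomial])
  finally show ?thesis .
qed

lemma mat_sum_parity_post_G_op: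
  "mat_sum (2 ^ n) (\<lambda>q. complex_of_real (parity_post J S \<sigma> q X e) \<cdot>\<^sub>m G_op n Om q X) (q_set n) =
   complex_of_real (1 / 2 ^ (2 * n) / 2) \<cdot>\<^sub>m 1\<^sub>m (2 ^ n) +
   complex_of_real (e * \<sigma> * xS X S / 2 / 2 ^ (2 * n)) \<cdot>\<^sub>m foldr (*) (map (pair_op X) [1..<n+1]) (1\<^sub>m (2 ^ n))"
proof -
  define w where "w J' q = complex_of_real (\<Prod>j\<in>J'. real_of_int (q j)) \<cdot>\<^sub>m G_op n Om q X" for J' q
  have w_carrier: "w J' q \<in> carrier_mat (2 ^ n) (2 ^ n)" for J' q
    unfolding w_def by simp
  have "complex_of_real (parity_post J S \<sigma> q X e) \<cdot>\<^sub>m G_op n Om q X =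
      complex_of_real (1 / 2) \<cdot>\<^sub>m w {} q + complex_of_real (e * \<sigma> * xS X S / 2) \<cdot>\<^sub>m w J q" for q
    unfolding parity_post_def w_def by (rule eq_matI) (auto simp: field_simps)
  then have "mat_sum (2 ^ n) (\<lambda>q. complex_of_real (parity_post J S \<sigma> q X e) \<cdot>\<^sub>m G_op n Om q X) (q_set n) =
      complex_of_real (1 / 2) \<cdot>\<^sub>m mat_sum (2 ^ n) (w {}) (q_set n) +
      complex_of_real (e * \<sigma> * xS X S / 2) \<cdot>\<^sub>m mat_sum (2 ^ n) (w J) (q_set n)"
    using w_carrier by (simp add: mat_sum_add mat_sum_smult)
  also have "mat_sum (2 ^ n) (w {}) (q_set n) = complex_of_real (1 / 2 ^ (2 * n)) \<cdot>\<^sub>m 1\<^sub>m (2 ^ n)"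
    unfolding w_def mat_sum_parity_G_op[OF empty_subsetI]
    by (simp only: empty_iff if_False foldr_mult_one_mat)
  also have "mat_sum (2 ^ n) (w J) (q_set n) =
      complex_of_real (1 / 2 ^ (2 * n)) \<cdot>\<^sub>m foldr (*) (map (pair_op X) [1..<n+1]) (1\<^sub>m (2 ^ n))"
    unfolding w_def pair_op_def[abs_def] by (rule mat_sum_parity_G_op[OF J_subset])
  finally show ?thesis by (simp add: smult_smult_mat mult.commute)
qed

lemma mat_sum_Pow_parity_post_G_op:
  "mat_sum (2 ^ n) (\<lambda>X. mat_sum (2 ^ n) (\<lambda>q. complex_of_real (parity_post J S \<sigma> q X e) \<cdot>\<^sub>m G_op n Om q X)
     (q_set n)) (Pow (idx2 n)) =
   complex_of_real (1 / 2) \<cdot>\<^sub>m 1\<^sub>m (2 ^ n) +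
   complex_of_real (e * \<sigma> / 2 * (\<Prod>j\<in>{1..n}. pair_det j (diag_choice j))) \<cdot>\<^sub>m choice_gamma diag_choice"
proof -
  define F where "F X = foldr (*) (map (pair_op X) [1..<n+1]) (1\<^sub>m (2 ^ n))" for X
  have F_carrier: "F X \<in> carrier_mat (2 ^ n) (2 ^ n)" for X
    unfolding F_def by (rule foldr_mult_carrier) simp
  define c\<^sub>1 where "c\<^sub>1 = complex_of_real (1 / 2 ^ (2 * n) / 2)"
  define c\<^sub>2 where "c\<^sub>2 = complex_of_real (e * \<sigma> / 2 / 2 ^ (2 * n))"
  have "complex_of_real (e * \<sigma> * xS X S / 2 / 2 ^ (2 * n)) \<cdot>\<^sub>m F X = c\<^sub>2 \<cdot>\<^sub>m (complex_of_real (xS X S) \<cdot>\<^sub>m F X)"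
    for X unfolding c\<^sub>2_def by (simp add: smult_smult_mat)
  then have "mat_sum (2 ^ n) (\<lambda>X. mat_sum (2 ^ n) (\<lambda>q. complex_of_real (parity_post J S \<sigma> q X e) \<cdot>\<^sub>m G_op n Om q X)
      (q_set n)) (Pow (idx2 n)) =
      mat_sum (2 ^ n) (\<lambda>X. c\<^sub>1 \<cdot>\<^sub>m 1\<^sub>m (2 ^ n) + c\<^sub>2 \<cdot>\<^sub>m (complex_of_real (xS X S) \<cdot>\<^sub>m F X)) (Pow (idx2 n))"
    unfolding c\<^sub>1_def by (intro mat_sum_cong) (simp only: mat_sum_parity_post_G_op F_def)
  also have "\<dots> = mat_sum (2 ^ n) (\<lambda>X. c\<^sub>1 \<cdot>\<^sub>m 1\<^sub>m (2 ^ n)) (Pow (idx2 n)) +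
      mat_sum (2 ^ n) (\<lambda>X. c\<^sub>2 \<cdot>\<^sub>m (complex_of_real (xS X S) \<cdot>\<^sub>m F X)) (Pow (idx2 n))"
    by (rule mat_sum_add) (simp_all add: F_carrier)
  also have "mat_sum (2 ^ n) (\<lambda>X. c\<^sub>1 \<cdot>\<^sub>m 1\<^sub>m (2 ^ n)) (Pow (idx2 n)) = (\<Sum>X\<in>Pow (idx2 n). c\<^sub>1) \<cdot>\<^sub>m 1\<^sub>m (2 ^ n)"
    by (rule mat_sum_smult_const) simp
  also have "(\<Sum>X\<in>Pow (idx2 n). c\<^sub>1) = complex_of_real (1 / 2)"
    unfolding c\<^sub>1_def using finite_idx2 card_idx2 by (simp add: card_Pow)
  also have "mat_sum (2 ^ n) (\<lambda>X. c\<^sub>2 \<cdot>\<^sub>m (complex_of_real (xS X S) \<cdot>\<^sub>m F X)) (Pow (idx2 n)) =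
      c\<^sub>2 \<cdot>\<^sub>m mat_sum (2 ^ n) (\<lambda>X. complex_of_real (xS X S) \<cdot>\<^sub>m F X) (Pow (idx2 n))"
    by (rule mat_sum_smult) (simp add: F_carrier)
  also have "\<dots> = complex_of_real (e * \<sigma> / 2 * (\<Prod>j\<in>{1..n}. pair_det j (diag_choice j))) \<cdot>\<^sub>m
      choice_gamma diag_choice"
  proof -
    have "c\<^sub>2 * complex_of_real (2 ^ (2 * n) * (\<Prod>j\<in>{1..n}. pair_det j (diag_choice j))) =
        complex_of_real (e * \<sigma> / 2 * (\<Prod>j\<in>{1..n}. pair_det j (diag_choice j)))"
      unfolding c\<^sub>2_def of_real_mult[symmetric] by (simp add: field_simps)
    then show ?thesis unfolding F_def mat_sum_xS_foldr_pair_op by (simp only: smult_smult_mat)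
  qed
  finally show ?thesis .
qed

theorem jointly_measures_M_op:
  "jointly_measures n (G_op n Om) (M_op n \<bar>det (submat_RS Om (\<rho> ` S) S)\<bar> S)"
proof -
  define \<eta> where "\<eta> = \<bar>det (submat_RS Om (\<rho> ` S) S)\<bar>"
  define c\<^sub>0 where "c\<^sub>0 = (\<Prod>j\<in>{1..n}. pair_det j (diag_choice j))"
  obtain s where s: "s \<in> {1, -1 :: complex}" "choice_gamma diag_choice = s \<cdot>\<^sub>m gammaS n S"
    using choice_gamma_diag_choice by blast
  define s\<^sub>r :: real where "s\<^sub>r = (if s = 1 then 1 else -1)"
  have s_real: "s = complex_of_real s\<^sub>r" using s(1) unfolding s\<^sub>r_def by auto
  define \<sigma> where "\<sigma> = sgn c\<^sub>0 * s\<^sub>r"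
  have "\<bar>\<sigma>\<bar> \<le> 1" unfolding \<sigma>_def s\<^sub>r_def by (simp add: abs_mult abs_sgn_eq)
  have \<sigma>_\<eta>: "\<sigma> * c\<^sub>0 * s\<^sub>r = \<eta>"
    using abs_prod_pair_det_diag_choice unfolding \<sigma>_def \<eta>_def c\<^sub>0_def s\<^sub>r_def
    by (simp add: abs_sgn mult.commute)
  show ?thesis
    unfolding jointly_measures_def \<eta>_def[symmetric]
  proof (intro exI[of _ "parity_post J S \<sigma>"] conjI ballI)
    fix q X assume "q \<in> q_set n"
    note stochastic = parity_post_stochastic[OF \<open>\<bar>\<sigma>\<bar> \<le> 1\<close> this J_subset, of S X]
    show "parity_post J S \<sigma> q X e \<ge> 0" if "e \<in> {-1, 1}" for e
      using stochastic(1) that by blast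
    show "(\<Sum>e\<in>{-1, 1}. parity_post J S \<sigma> q X e) = 1"
      by (rule stochastic(2))
  next
    fix e :: int assume "e \<in> {-1, 1}"
    have reassoc: "real_of_int e * \<sigma> / 2 * c\<^sub>0 * s\<^sub>r = real_of_int e * (\<sigma> * c\<^sub>0 * s\<^sub>r) / 2"
      by (simp add: field_simps)
    have scalar: "complex_of_real (e * \<sigma> / 2 * c\<^sub>0) \<cdot>\<^sub>m choice_gamma diag_choice =
        complex_of_real (e * \<eta> / 2) \<cdot>\<^sub>m gammaS n S"
      unfolding s(2) s_real smult_smult_mat of_real_mult[symmetric] by (simp only: reassoc \<sigma>_\<eta>)
    have "mat (2 ^ n) (2 ^ n) (\<lambda>(a, b). \<Sum>q\<in>q_set n. \<Sum>X\<in>Pow (idx2 n).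
        complex_of_real (parity_post J S \<sigma> q X e) * G_op n Om q X $$ (a, b)) =
      complex_of_real (1 / 2) \<cdot>\<^sub>m 1\<^sub>m (2 ^ n) + complex_of_real (e * \<eta> / 2) \<cdot>\<^sub>m gammaS n S"
      by (subst mat_double_sum_eq_mat_sum)
        (simp_all only: G_op_carrier mat_sum_Pow_parity_post_G_op c\<^sub>0_def[symmetric] scalar)
    then show "M_op n \<eta> S e = mat (2 ^ n) (2 ^ n) (\<lambda>(a, b). \<Sum>q\<in>q_set n. \<Sum>X\<in>Pow (idx2 n).
        complex_of_real (parity_post J S \<sigma> q X e) * G_op n Om q X $$ (a, b))"
      unfolding M_op_def by (intro eq_matI) (auto simp: field_simps)
  qed
qed

end

section \<open>Choosing the rows\<close>

text \<open>Pair up the points of \<open>S\<close> arbitrarily and pick, for each pair \<open>{s, s'}\<close>, an edge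
  \<open>{v, w}\<close> with \<open>P s v\<close> and \<open>P s' w\<close>; since \<open>P\<close> determines the point from the
  endpoint, the chosen edges are distinct.\<close>

lemma matching_edges_cover:
  assumes "finite S" "card S = 2 * k"
    and excl: "\<And>s s' v. s \<in> S \<Longrightarrow> s' \<in> S \<Longrightarrow> P s v \<Longrightarrow> P s' v \<Longrightarrow> s = s'"
    and edge: "\<And>s s'. s \<in> S \<Longrightarrow> s' \<in> S \<Longrightarrow> s \<noteq> s' \<Longrightarrow> \<exists>v w. {v, w} \<in> M \<and> P s v \<and> P s' w"
  shows "\<exists>\<rho> Ms. (\<forall>s\<in>S. P s (\<rho> s)) \<and> Ms \<subseteq> M \<and> card Ms = k \<and> \<Union>Ms = \<rho> ` S"
  using assms
proof (induction k arbitrary: S)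
  case 0
  then show ?case by (intro exI[of _ "\<lambda>_. undefined"] exI[of _ "{}"]) auto
next
  case (Suc k)
  obtain s T where T: "S = insert s T" "s \<notin> T" "card T = Suc (2 * k)"
    using card_eq_SucD[of S "Suc (2 * k)"] Suc.prems(2) by auto
  obtain s' where "s' \<in> T"
    using card_eq_SucD[OF T(3)] by blast
  then have s: "s \<in> S" "s' \<in> S" "s \<noteq> s'" using T by auto
  obtain v w where vw: "{v, w} \<in> M" "P s v" "P s' w"
    using Suc.prems(4)[OF s] by blast
  let ?S = "S - {s, s'}"
  have "\<exists>\<rho> Ms. (\<forall>t\<in>?S. P t (\<rho> t)) \<and> Ms \<subseteq> M \<and> card Ms = k \<and> \<Union>Ms = \<rho> ` ?S"
  proof (rule Suc.IH)
    show "finite ?S" using Suc.prems(1) by simp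
    show "card ?S = 2 * k" using Suc.prems(1,2) s by (simp add: card_Diff_subset)
    show "t = t'" if "t \<in> ?S" "t' \<in> ?S" "P t u" "P t' u" for t t' u
      using Suc.prems(3) that by blast
    show "\<exists>v w. {v, w} \<in> M \<and> P t v \<and> P t' w" if "t \<in> ?S" "t' \<in> ?S" "t \<noteq> t'" for t t'
      using Suc.prems(4) that by blast
  qed
  then obtain \<rho> Ms where IH: "\<forall>t\<in>?S. P t (\<rho> t)" "Ms \<subseteq> M" "card Ms = k" "\<Union>Ms = \<rho> ` ?S"
    by blast
  define \<rho>' where "\<rho>' = \<rho>(s := v, s' := w)"
  have P_\<rho>': "\<forall>t\<in>S. P t (\<rho>' t)"
    using IH(1) vw s unfolding \<rho>'_def by auto
  have "v \<notin> \<Union>Ms"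
  proof
    assume "v \<in> \<Union>Ms"
    then obtain t where "t \<in> ?S" "v = \<rho> t" using IH(4) by blast
    then show False using IH(1) Suc.prems(3)[of t s v] vw(2) s(1) by auto
  qed
  then have new: "{v, w} \<notin> Ms" by blast
  have "finite Ms"
    using IH(4) Suc.prems(1) by (metis finite_Diff finite_UnionD finite_imageI)
  moreover have "\<Union>(insert {v, w} Ms) = \<rho>' ` S"
    using IH(4) s unfolding \<rho>'_def by auto
  ultimately show ?case
    using P_\<rho>' IH(2,3) vw(1) new by (intro exI[of _ \<rho>'] exI[of _ "insert {v, w} Ms"]) auto
qed

lemma card_2_eq_doubleton: "card e = 2 \<Longrightarrow> v \<in> e \<Longrightarrow> w \<in> e \<Longrightarrow> v \<noteq> w \<Longrightarrow> e = {v, w}"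
  by (metis card_2_iff doubleton_eq_iff insertE singletonD)


lemma partition_l_subset: "partition_l n l B \<Longrightarrow> i \<in> {1..l+1} \<Longrightarrow> B i \<subseteq> idx2 n"
  unfolding partition_l_def by blast

lemma partition_l_disjoint:
  "partition_l n l B \<Longrightarrow> i \<in> {1..l+1} \<Longrightarrow> i' \<in> {1..l+1} \<Longrightarrow> v \<in> B i \<Longrightarrow> v \<in> B i' \<Longrightarrow> i = i'"
  unfolding partition_l_def by blast

lemma partition_l_cover: "partition_l n l B \<Longrightarrow> v \<in> idx2 n \<Longrightarrow> \<exists>i\<in>{1..l+1}. v \<in> B i"
  unfolding partition_l_def by blast

definition same_block :: "nat \<Rightarrow> (nat \<Rightarrow> nat set) \<Rightarrow> (nat \<Rightarrow> nat set) \<Rightarrow> nat \<Rightarrow> nat \<Rightarrow> bool" where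
  "same_block l B C s v \<longleftrightarrow> (\<exists>i\<in>{1..l+1}. s \<in> C i \<and> v \<in> B i)"

lemma same_block_unique:
  assumes "partition_l n l B"
    and hSC: "\<forall>s\<in>S. \<forall>s'\<in>S. s \<noteq> s' \<longrightarrow> \<not> (\<exists>i\<in>{1..l+1}. s \<in> C i \<and> s' \<in> C i)"
    and "s \<in> S" "s' \<in> S" "same_block l B C s v" "same_block l B C s' v"
  shows "s = s'"
  using assms partition_l_disjoint[OF assms(1)] unfolding same_block_def by metis

lemma exists_same_block_rows:
  assumes hB: "partition_l n l B" and hC: "partition_l n l C"
    and hM: "perfect_matching n M"
    and hsparse: "\<forall>i\<in>{1..l+1}. \<forall>i'\<in>{1..l+1}. i \<noteq> i' \<longrightarrow> (\<exists>e\<in>M. \<exists>v\<in>e. \<exists>w\<in>e. v \<in> B i \<and> w \<in> B i')"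
    and hS: "S \<in> subsets_card n (2 * k)"
    and hSC: "\<forall>s\<in>S. \<forall>s'\<in>S. s \<noteq> s' \<longrightarrow> \<not> (\<exists>i\<in>{1..l+1}. s \<in> C i \<and> s' \<in> C i)"
  shows "\<exists>\<rho> Ms. (\<forall>s\<in>S. same_block l B C s (\<rho> s)) \<and> Ms \<subseteq> M \<and> card Ms = k \<and> \<Union>Ms = \<rho> ` S"
proof (rule matching_edges_cover)
  have S: "S \<subseteq> idx2 n" using hS unfolding subsets_card_def by blast
  show "finite S" "card S = 2 * k"
    using hS unfolding subsets_card_def idx2_def by (auto intro: finite_subset)
  show "s = s'" if "s \<in> S" "s' \<in> S" "same_block l B C s v" "same_block l B C s' v" for s s' v
    using same_block_unique[OF hB hSC that] .
  show "\<exists>v w. {v, w} \<in> M \<and> same_block l B C s v \<and> same_block l B C s' w"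
    if s: "s \<in> S" "s' \<in> S" "s \<noteq> s'" for s s'
  proof -
    obtain i i' where i: "i \<in> {1..l+1}" "s \<in> C i" "i' \<in> {1..l+1}" "s' \<in> C i'"
      using partition_l_cover[OF hC] s(1,2) S by (meson subsetD)
    then have "i \<noteq> i'" using hSC s by blast
    then obtain e v w where e: "e \<in> M" "v \<in> e" "w \<in> e" "v \<in> B i" "w \<in> B i'"
      using hsparse i by blast
    have "v \<noteq> w" using partition_l_disjoint[OF hB] i e \<open>i \<noteq> i'\<close> by blast
    moreover have "card e = 2" using hM e(1) unfolding perfect_matching_def by blast
    ultimately have "{v, w} \<in> M" using e card_2_eq_doubleton by metis
    then show ?thesis using i e unfolding same_block_def by blast
  qed
qed

lemma same_block_rows_monomial:
  fixes c :: real
  assumes "l \<ge> 1" "c > 0"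
    and hB: "partition_l n l B"
    and hsupp: "\<forall>v\<in>idx2 n. \<forall>j\<in>idx2 n. Om v j \<noteq> 0 \<longrightarrow> (\<exists>i\<in>{1..l+1}. v \<in> B i \<and> j \<in> C i)"
    and hlow: "\<forall>i\<in>{1..l+1}. \<forall>v\<in>B i. \<forall>j\<in>C i. \<bar>Om v j\<bar> \<ge> c / sqrt (real l)"
    and hS: "S \<in> subsets_card n (2 * k)"
    and hSC: "\<forall>s\<in>S. \<forall>s'\<in>S. s \<noteq> s' \<longrightarrow> \<not> (\<exists>i\<in>{1..l+1}. s \<in> C i \<and> s' \<in> C i)"
    and \<rho>: "\<forall>s\<in>S. same_block l B C s (\<rho> s)"
  shows "inj_on \<rho> S" "\<forall>s\<in>S. \<forall>s'\<in>S. Om (\<rho> s) s' \<noteq> 0 \<longleftrightarrow> s = s'"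
    and low: "\<forall>s\<in>S. \<bar>Om (\<rho> s) s\<bar> \<ge> c / sqrt (real l)"
proof -
  have S: "S \<subseteq> idx2 n" using hS unfolding subsets_card_def by blast
  show "inj_on \<rho> S" using \<rho> same_block_unique[OF hB hSC] by (intro inj_onI) metis
  show low: "\<forall>s\<in>S. \<bar>Om (\<rho> s) s\<bar> \<ge> c / sqrt (real l)"
    using \<rho> hlow unfolding same_block_def by blast
  show "\<forall>s\<in>S. \<forall>s'\<in>S. Om (\<rho> s) s' \<noteq> 0 \<longleftrightarrow> s = s'"
  proof (intro ballI iffI)
    fix s s' assume s: "s \<in> S" "s' \<in> S" and "Om (\<rho> s) s' \<noteq> 0"
    moreover have "\<rho> s \<in> idx2 n" using \<rho> s partition_l_subset[OF hB] unfolding same_block_def by blast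
    ultimately obtain i where "i \<in> {1..l+1}" "\<rho> s \<in> B i" "s' \<in> C i" using hsupp S by blast
    then have "same_block l B C s' (\<rho> s)" unfolding same_block_def by blast
    then show "s = s'" using \<rho> s same_block_unique[OF hB hSC] by blast
  next
    fix s s' assume "s \<in> S" "s = s'"
    moreover have "c / sqrt (real l) > 0" using assms(1,2) by simp
    ultimately show "Om (\<rho> s) s' \<noteq> 0" using low by fastforce
  qed
qed

lemma perm_rows_apply: "inj \<pi> \<Longrightarrow> perm_rows \<pi> Om (\<pi> v) j = Om v j"
  unfolding perm_rows_def by (simp add: inv_into_f_f)

lemma Majorana_pairs_of_D2:
  assumes "F \<subseteq> D2 n" "card F = k"
  obtains J where "J \<subseteq> {1..n}" "card J = k" "\<Union>F = (\<Union>j\<in>J. {2 * j - 1, 2 * j})"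
proof -
  define J where "J = {j\<in>{1..n}. {2 * j - 1, 2 * j} \<in> F}"
  have F: "F = (\<lambda>j. {2 * j - 1, 2 * j}) ` J"
    using assms(1) unfolding J_def D2_def by auto
  have "inj_on (\<lambda>j. {2 * j - 1, 2 * (j :: nat)}) J"
    by (rule inj_onI) (auto simp: J_def doubleton_eq_iff)
  then have "card J = k" using assms(2) F card_image by metis
  have "J \<subseteq> {1..n}" unfolding J_def by blast
  then show ?thesis using \<open>card J = k\<close> by (rule that) (simp add: F)
qed

lemma image_Union_matching_D2k:
  assumes "inj \<pi>" "\<forall>e\<in>M. \<pi> ` e \<in> D2 n" "Ms \<subseteq> M" "card Ms = k"
  shows "\<pi> ` \<Union>Ms \<in> D2k n k"
    and "\<exists>J. J \<subseteq> {1..n} \<and> card J = k \<and> \<pi> ` \<Union>Ms = (\<Union>j\<in>J. {2 * j - 1, 2 * j})"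
proof -
  define F where "F = (\<lambda>e. \<pi> ` e) ` Ms"
  have "inj_on (image \<pi>) Ms" using assms(1) by (simp add: inj_on_def inj_image_eq_iff)
  then have "card F = k" unfolding F_def using assms(4) by (simp add: card_image)
  moreover have "F \<subseteq> D2 n" unfolding F_def using assms(2,3) by blast
  moreover have "\<Union>F = \<pi> ` \<Union>Ms" unfolding F_def by blast
  ultimately have F: "F \<subseteq> D2 n" "card F = k" "\<Union>F = \<pi> ` \<Union>Ms" by blast+
  then show "\<pi> ` \<Union>Ms \<in> D2k n k" unfolding D2k_def mem_Collect_eq by (intro exI[of _ F]) simp
  obtain J where "J \<subseteq> {1..n}" "card J = k" "\<Union>F = (\<Union>j\<in>J. {2 * j - 1, 2 * j})"
    using F(1,2) by (rule Majorana_pairs_of_D2)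
  then show "\<exists>J. J \<subseteq> {1..n} \<and> card J = k \<and> \<pi> ` \<Union>Ms = (\<Union>j\<in>J. {2 * j - 1, 2 * j})"
    using F(3) by auto
qed

lemma abs_det_submat_RS_monomial_ge_pow:
  fixes c :: real
  assumes "l \<ge> 1" "c > 0" "S \<in> subsets_card n (2 * k)"
    and "inj_on \<rho> S" "\<forall>s\<in>S. \<forall>s'\<in>S. Om (\<rho> s) s' \<noteq> 0 \<longleftrightarrow> s = s'"
    and "\<forall>s\<in>S. \<bar>Om (\<rho> s) s\<bar> \<ge> c / sqrt (real l)"
  shows "\<bar>det (submat_RS Om (\<rho> ` S) S)\<bar> \<ge> c ^ (2 * k) / real l ^ k"
proof -
  have S: "finite S" "card S = 2 * k"
    using assms(3) unfolding subsets_card_def idx2_def by (auto intro: finite_subset)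
  have "(c / sqrt (real l)) ^ (2 * k) = c ^ (2 * k) / real l ^ k"
    using assms(1) by (simp add: power_divide power_mult)
  then show ?thesis
    using abs_det_submat_RS_monomial_ge[OF S(1) assms(4-6)] assms(2) S(2) by simp
qed

theorem mainTheorem8:
  fixes l n k :: nat and c :: real
    and B C :: "nat \<Rightarrow> nat set"
    and Om :: "nat \<Rightarrow> nat \<Rightarrow> real"
    and M :: "nat set set"
    and S :: "nat set"
  assumes hl: "l \<ge> 1"
    and hn: "2 * n = l * (l + 1)"
    and hc: "c > 0"
    and hk: "k \<ge> 1" "2 * k \<le> l + 1"
    and hB: "partition_l n l B"
    and hC: "partition_l n l C"
    and hO: "orthogonal_2n n Om"
    and hsupp: "\<forall>v\<in>idx2 n. \<forall>j\<in>idx2 n. Om v j \<noteq> 0 \<longrightarrow> (\<exists>i\<in>{1..l+1}. v \<in> B i \<and> j \<in> C i)"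
    and hlow: "\<forall>i\<in>{1..l+1}. \<forall>v\<in>B i. \<forall>j\<in>C i. \<bar>Om v j\<bar> \<ge> c / sqrt (real l)"
    and hM: "perfect_matching n M"
    and hMB: "\<forall>e\<in>M. \<exists>v w i i'. e = {v, w} \<and> i \<in> {1..l+1} \<and> i' \<in> {1..l+1} \<and> i \<noteq> i'
                  \<and> v \<in> B i \<and> w \<in> B i'"
    and hsparse: "\<forall>i\<in>{1..l+1}. \<forall>i'\<in>{1..l+1}. i \<noteq> i' \<longrightarrow>
                    (\<exists>e\<in>M. \<exists>v\<in>e. \<exists>w\<in>e. v \<in> B i \<and> w \<in> B i')"
    and hS: "S \<in> subsets_card n (2 * k)"
    and hSC: "\<forall>s\<in>S. \<forall>s'\<in>S. s \<noteq> s' \<longrightarrow> \<not> (\<exists>i\<in>{1..l+1}. s \<in> C i \<and> s' \<in> C i)"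
  shows "\<exists>Ms. Ms \<subseteq> M \<and> card Ms = k \<and>
           monomial_sub Om (\<Union>Ms) S \<and>
           \<bar>det (submat_RS Om (\<Union>Ms) S)\<bar> \<ge> c ^ (2 * k) / real l ^ k \<and>
           (\<forall>\<pi>. \<pi> permutes idx2 n \<and> (\<forall>e\<in>M. \<pi> ` e \<in> D2 n) \<longrightarrow>
              \<pi> ` (\<Union>Ms) \<in> D2k n k \<and>
              (let \<eta> = \<bar>det (submat_RS (perm_rows \<pi> Om) (\<pi> ` (\<Union>Ms)) S)\<bar>
               in \<eta> \<ge> c ^ (2 * k) / real l ^ k \<and>
                  jointly_measures n (G_op n (perm_rows \<pi> Om)) (M_op n \<eta> S)))"
proof -
  obtain \<rho> Ms where \<rho>: "\<forall>s\<in>S. same_block l B C s (\<rho> s)" and Ms: "Ms \<subseteq> M" "card Ms = k" "\<Union>Ms = \<rho> ` S"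
    using exists_same_block_rows[OF hB hC hM hsparse hS hSC] by blast
  note rows = same_block_rows_monomial[OF hl hc hB hsupp hlow hS hSC \<rho>]
  note inj = rows(1) and monomial = rows(2) and low = rows(3)
  note bound = abs_det_submat_RS_monomial_ge_pow[OF hl hc hS]
  show ?thesis
  proof (intro exI[of _ Ms] conjI allI impI)
    show "Ms \<subseteq> M" "card Ms = k" by (fact Ms(1), fact Ms(2))
    show "monomial_sub Om (\<Union>Ms) S" unfolding Ms(3) by (rule monomial_sub_image[OF inj monomial])
    show "\<bar>det (submat_RS Om (\<Union>Ms) S)\<bar> \<ge> c ^ (2 * k) / real l ^ k"
      unfolding Ms(3) by (rule bound[OF inj monomial low])
  next
    fix \<pi> assume "\<pi> permutes idx2 n \<and> (\<forall>e\<in>M. \<pi> ` e \<in> D2 n)"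
    then have \<pi>: "inj \<pi>" "\<forall>e\<in>M. \<pi> ` e \<in> D2 n" by (auto simp: permutes_inj)
    show "\<pi> ` \<Union>Ms \<in> D2k n k" by (rule image_Union_matching_D2k(1)[OF \<pi> Ms(1,2)])
    obtain J where J: "J \<subseteq> {1..n}" "card J = k" "(\<pi> \<circ> \<rho>) ` S = (\<Union>j\<in>J. {2 * j - 1, 2 * j})"
      using image_Union_matching_D2k(2)[OF \<pi> Ms(1,2)] Ms(3) by (auto simp: image_comp)
    have inj': "inj_on (\<pi> \<circ> \<rho>) S" using inj \<pi>(1) by (simp add: comp_inj_on inj_on_subset)
    note permuted = perm_rows_apply[OF \<pi>(1)]
    interpret monomial_pairing n k "perm_rows \<pi> Om" J S "\<pi> \<circ> \<rho>"
      using J hS inj' monomial by unfold_locales (simp_all add: permuted)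
    show "let \<eta> = \<bar>det (submat_RS (perm_rows \<pi> Om) (\<pi> ` (\<Union>Ms)) S)\<bar>
          in \<eta> \<ge> c ^ (2 * k) / real l ^ k \<and> jointly_measures n (G_op n (perm_rows \<pi> Om)) (M_op n \<eta> S)"
      unfolding Let_def Ms(3) image_comp
      using bound[OF inj'] monomial low jointly_measures_M_op by (simp add: permuted)
  qed
qed

end
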